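(* Let $G=(V,E)$, the token alphabet, the training distribution $\mathcal{D}_{\mathrm{train}}$ and the program distribution $P_{\mathrm{prog}}$ be as described in the context. Let $k\ge 1$, let $(\widetilde{\mathtt{inp}}^k,\widetilde{\mathtt{lab}}^k)$ be any input–label pair in the support of $\mathcal{D}_{\mathrm{train}}$, let $d^k$ be the length of $\widetilde{\mathtt{lab}}^k$, let $0\le t\le d^k-1$, and put $z_{1:T}:=\widetilde{\mathtt{inp}}^k+\widetilde{\mathtt{lab}}^k_{1:t}$ (concatenation). Then $P_{\mathrm{prog}}(\cdot\mid z_{1:T})=P_{\mathrm{train}}(\cdot\mid z_{1:T})$, where $P_{\mathrm{train}}(\cdot\mid z_{1:T})$ is the conditional distribution, under $\mathcal{D}_{\mathrm{train}}$, of the next token $\widetilde{\mathtt{lab}}^k_{t+1}$ given the prefix $z_{1:T}$. Consequently $P_{\mathrm{prog}}$ minimizes the few-shot training loss $\widehat{L}_{\mathrm{train}}(P):=-\mathbb{E}_{\mathcal{D}_{\mathrm{train}}}\sum_{k=1}^{K-1}\sum_{t=1}^{d^k-1}\log P\big(\widetilde{\mathtt{lab}}^k_{t+1}\mid \widetilde{\mathtt{inp}}^k+\widetilde{\mathtt{lab}}^k_{1:t}\big)$ over all next-token distributions $P$.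
   Context: Causal structure. Let $\mathcal{V}_{\mathrm{all}}$ be a finite alphabet of vertex symbols and $G=(V,E)$ a directed graph with $V\subseteq\mathcal{V}_{\mathrm{all}}$. Every $v\in\mathcal{V}_{\mathrm{all}}$ has a finite value set $\mathtt{VALS}(v)\subset\mathbb{Z}$ and a finite nonempty set $\mathtt{CONT}(v)$ of context tokens; the sets $\mathtt{CONT}(v)$ are pairwise disjoint and disjoint from vertex and value symbols. Each edge $e=(v_1,v_2)\in E$ ($v_1$ the parent, $v_2$ the child) carries an operation $\mathtt{op}(e)$ of the form $q\mapsto q+c_e$ ($c_e\in\mathbb{Z}$) mapping $\mathtt{VALS}(v_1)$ into $\mathtt{VALS}(v_2)$. Chains are $\mathcal{T}(G)=\{[v_1,\dots,v_n]: (v_i,v_{i+1})\in E\}$; the depth $N$ is the length of the longest chain. Special tokens: $o^{\mathrm{eq}}$ ("="), $o^{\mathrm{cm}}$ (","), $o^{\mathrm{qu}}$ ("?"), $o^{\mathrm{dlm}}$ (newline delimiter). Training sequences. Fix $M<N$ and $M'\ge0$. Take a chain $[u_1,\dots,u_M]\in\mathcal{T}(G)$ and noise vertices $u'_1,\dots,u'_{M'}\in\mathcal{V}_{\mathrm{all}}\setminus V$, and interleave them preserving both relative orders into $[v_1,\dots,v_m]$, $m=M+M'$. Values: the chain vertices get $q(u_1)\sim\mathrm{Uniform}(\mathtt{VALS}(u_1))$ and $q(u_h)=\mathtt{op}(u_{h-1},u_h)(q(u_{h-1}))$; each noise vertex independently gets a uniform value from its $\mathtt{VALS}$. This gives $[v_1,q_1,\dots,v_m,q_m]$.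 Processing. A sequence $[v_1,q_1,\dots,v_L,q_L]$ is turned into $[v_L,o^{\mathrm{eq}},o^{\mathrm{qu}},c(v_1)_1,\dots,c(v_1)_{l_1},v_1,o^{\mathrm{eq}},q_1,o^{\mathrm{cm}},\dots,o^{\mathrm{cm}},c(v_L)_1,\dots,c(v_L)_{l_L},v_L,o^{\mathrm{eq}},q_L]$, where independently for each $i$, $l_i\sim\mathrm{Uniform}\{1,\dots,|\mathtt{CONT}(v_i)|\}$ and $c(v_i)_1,\dots,c(v_i)_{l_i}$ are drawn from $\mathtt{CONT}(v_i)$ without replacement. Few-shot data. For $k\in\{0,\dots,K\}$, take $k+1$ sequences with the same vertex list $[v_1,\dots,v_L]$ and independently sampled values and context tokens; the processed document is $\widetilde{\mathtt{seq}}^{(1)},o^{\mathrm{dlm}},\dots,o^{\mathrm{dlm}},\widetilde{\mathtt{seq}}^{(k)}$. The input $\widetilde{\mathtt{inp}}^k$ is this document followed by $o^{\mathrm{dlm}}$ and the prefix $[v_L,o^{\mathrm{eq}},o^{\mathrm{qu}},c(v_1)^{(k+1)}_1,\dots,c(v_1)^{(k+1)}_{l_1},v_1,o^{\mathrm{eq}},q_1^{(k+1)},o^{\mathrm{cm}}]$ of the processed $(k+1)$-th sequence, and the label $\widetilde{\mathtt{lab}}^k$ is the rest of that processed sequence. $\mathcal{D}_{\mathrm{train}}$ is the resulting distribution when training sequences are used. Program $P_{\mathrm{prog}}(\cdot\mid z_{1:T})$ (defined for sentences containing at least one complete previous shot): (i) if $z_T=o^{\mathrm{cm}}$, then $z_{T-3}$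 is a vertex $v_i$; find $v_i$ in the previous shots and the vertex $v_{i+1}$ following it there; output $\mathrm{Uniform}(\mathtt{CONT}(v_{i+1}))$. (ii) if $z_{T-k+1:T}=[c(v_j)_1,\dots,c(v_j)_k]$ is a run of context tokens of $v_j$ ending at $z_T$, output $\mathrm{Uniform}(\mathtt{CONT}(v_j)\cup\{v_j\}\setminus\{c(v_j)_1,\dots,c(v_j)_k\})$. (iii) if $z_T$ is a vertex $v_j$, output $o^{\mathrm{eq}}$ with probability 1. (iv) if $z_T=o^{\mathrm{eq}}$ with $z_{T-1}=v_j$: if $v_j\notin V$, output $\mathrm{Uniform}(\mathtt{VALS}(v_j))$; if $v_j\in V$ and $v_j$ is the first vertex of $V$ in the current sequence, output $\mathrm{Uniform}(\mathtt{VALS}(v_j))$; otherwise let $v_{j_1}$ with value $q_{j_1}$ be the nearest preceding vertex of $V$ in the current sequence (the parent of $v_j$) and output $\mathtt{op}(v_{j_1},v_j)(q_{j_1})$ with probability 1. (v) if $z_T$ is a value, output $o^{\mathrm{cm}}$ with probability 1. *)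

theory Defs
  imports "HOL-Probability.Probability"
begin

(* Tokens: vertex symbols, integer values, context tokens, and the four special tokens
   (=, ",", ?, delimiter). Constructors make the token classes pairwise disjoint. *)
datatype ('v, 'c) tok = Vx 'v | Val int | Ctx 'c | Eq | Cm | Qu | Dlm

definition is_chain :: "'v set \<Rightarrow> ('v \<times> 'v) set \<Rightarrow> 'v list \<Rightarrow> bool" where
  "is_chain V E u \<longleftrightarrow> set u \<subseteq> V \<and> (\<forall>i. Suc i < length u \<longrightarrow> (u ! i, u ! Suc i) \<in> E)"

definition depth :: "'v set \<Rightarrow> ('v \<times> 'v) set \<Rightarrow> enat" where
  "depth V E = Sup {enat (length u) | u. is_chain V E u}"

definition train_vlist :: "'v set \<Rightarrow> ('v \<times> 'v) set \<Rightarrow> nat \<Rightarrow> nat \<Rightarrow> 'v list \<Rightarrow> bool" where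
  "train_vlist V E M M' vs \<longleftrightarrow>
     (\<exists>u u'. is_chain V E u \<and> length u = M \<and> length u' = M' \<and> set u' \<inter> V = {}
             \<and> vs \<in> shuffles u u')"

fun seq_pmf :: "'a pmf list \<Rightarrow> 'a list pmf" where
  "seq_pmf [] = return_pmf []"
| "seq_pmf (p # ps) = bind_pmf p (\<lambda>x. map_pmf (Cons x) (seq_pmf ps))"

fun sample_vals :: "'v set \<Rightarrow> ('v \<times> 'v \<Rightarrow> int) \<Rightarrow> ('v \<Rightarrow> int set) \<Rightarrow> ('v \<times> int) option
                     \<Rightarrow> 'v list \<Rightarrow> int list pmf" where
  "sample_vals V c VALS prev [] = return_pmf []"
| "sample_vals V c VALS prev (v # vs) =
     (if v \<in> V then
        (case prev of
           None \<Rightarrow> bind_pmf (pmf_of_set (VALS v))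
                     (\<lambda>q. map_pmf (Cons q) (sample_vals V c VALS (Some (v, q)) vs))
         | Some (u, p) \<Rightarrow> map_pmf (Cons (p + c (u, v)))
                     (sample_vals V c VALS (Some (v, p + c (u, v))) vs))
      else bind_pmf (pmf_of_set (VALS v)) (\<lambda>q. map_pmf (Cons q) (sample_vals V c VALS prev vs)))"

(* context tokens of v: l ~ Uniform{1..|CONT v|}, then l tokens drawn without replacement
   (ordered), i.e. a uniform list of l distinct elements of CONT v *)
definition ctx_pmf :: "('v \<Rightarrow> 'c set) \<Rightarrow> 'v \<Rightarrow> 'c list pmf" where
  "ctx_pmf CONT v = bind_pmf (pmf_of_set {1..card (CONT v)})
     (\<lambda>l. pmf_of_set {xs. distinct xs \<and> set xs \<subseteq> CONT v \<and> length xs = l})"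

definition shot_pmf :: "'v set \<Rightarrow> ('v \<times> 'v \<Rightarrow> int) \<Rightarrow> ('v \<Rightarrow> int set) \<Rightarrow> ('v \<Rightarrow> 'c set)
                        \<Rightarrow> 'v list \<Rightarrow> ('v \<times> int \<times> 'c list) list pmf" where
  "shot_pmf V c VALS CONT vs =
     bind_pmf (sample_vals V c VALS None vs) (\<lambda>qs.
     map_pmf (\<lambda>cs. zip vs (zip qs cs)) (seq_pmf (map (ctx_pmf CONT) vs)))"

fun join_with :: "'a \<Rightarrow> 'a list list \<Rightarrow> 'a list" where
  "join_with s [] = []"
| "join_with s [x] = x"
| "join_with s (x # y # r) = x @ [s] @ join_with s (y # r)"

fun block :: "'v \<times> int \<times> 'c list \<Rightarrow> ('v, 'c) tok list" where
  "block (v, q, cs) = map Ctx cs @ [Vx v, Eq, Val q]"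

definition proc_shot :: "('v \<times> int \<times> 'c list) list \<Rightarrow> ('v, 'c) tok list" where
  "proc_shot sh = [Vx (fst (last sh)), Eq, Qu] @ join_with Cm (map block sh)"

(* few-shot input/label from shots 1..k+1 (list indices 0..k) *)
definition inp_lab :: "nat \<Rightarrow> ('v \<times> int \<times> 'c list) list list \<Rightarrow> ('v, 'c) tok list \<times> ('v, 'c) tok list" where
  "inp_lab k shots =
     (let sh = shots ! k in
       (join_with Dlm (map proc_shot (take k shots)) @ [Dlm] @
          [Vx (fst (last sh)), Eq, Qu] @ block (hd sh) @ [Cm],
        join_with Cm (map block (tl sh))))"

(* D_train for a given number k of shots; sigma = distribution of the vertex list
   (chain, noise vertices, interleaving) *)
definition D_train :: "'v set \<Rightarrow> ('v \<times> 'v \<Rightarrow> int) \<Rightarrow> ('v \<Rightarrow> int set) \<Rightarrow> ('v \<Rightarrow> 'c set)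
                       \<Rightarrow> 'v list pmf \<Rightarrow> nat \<Rightarrow> (('v, 'c) tok list \<times> ('v, 'c) tok list) pmf" where
  "D_train V c VALS CONT \<sigma> k =
     bind_pmf \<sigma> (\<lambda>vs. map_pmf (inp_lab k) (seq_pmf (replicate (Suc k) (shot_pmf V c VALS CONT vs))))"

definition P_train :: "(('v, 'c) tok list \<times> ('v, 'c) tok list) pmf \<Rightarrow> nat \<Rightarrow> ('v, 'c) tok list
                       \<Rightarrow> ('v, 'c) tok pmf" where
  "P_train D t z = map_pmf (\<lambda>(i, l). l ! t) (cond_pmf D {(i, l). i @ take t l = z})"

fun verts :: "('v, 'c) tok list \<Rightarrow> 'v list" where
  "verts [] = []"
| "verts (Vx v # r) = v # verts r"
| "verts (_ # r) = verts r"

fun pairs :: "('v, 'c) tok list \<Rightarrow> ('v \<times> int) list" where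
  "pairs (Vx u # Eq # Val q # r) = (u, q) # pairs r"
| "pairs [] = []"
| "pairs (_ # r) = pairs r"

fun is_ctx :: "('v, 'c) tok \<Rightarrow> bool" where
  "is_ctx (Ctx _) = True"
| "is_ctx _ = False"

(* current (last, incomplete) sequence and a previous complete shot (the first one) *)
definition cur_seq :: "('v, 'c) tok list \<Rightarrow> ('v, 'c) tok list" where
  "cur_seq z = rev (takeWhile (\<lambda>x. x \<noteq> Dlm) (rev z))"

definition prev_shot :: "('v, 'c) tok list \<Rightarrow> ('v, 'c) tok list" where
  "prev_shot z = takeWhile (\<lambda>x. x \<noteq> Dlm) z"

(* P_prog(. | z); "drop 3" removes the header v_L, =, ? of a sequence.
   On inputs not covered by rules (i)-(v) the output is irrelevant (arbitrary). *)
definition P_prog :: "'v set \<Rightarrow> ('v \<times> 'v \<Rightarrow> int) \<Rightarrow> ('v \<Rightarrow> int set) \<Rightarrow> ('v \<Rightarrow> 'c set)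
                      \<Rightarrow> ('v, 'c) tok list \<Rightarrow> ('v, 'c) tok pmf" where
  "P_prog V c VALS CONT z =
     (case rev z of
        Cm # _ \<Rightarrow>
          (let i = length (verts (drop 3 (cur_seq z)))
           in pmf_of_set (Ctx ` CONT (verts (drop 3 (prev_shot z)) ! i)))
      | Ctx x # _ \<Rightarrow>
          (let run = takeWhile is_ctx (rev z); vj = (THE v. x \<in> CONT v)
           in pmf_of_set ((Ctx ` CONT vj \<union> {Vx vj}) - set run))
      | Vx v # _ \<Rightarrow> return_pmf Eq
      | Eq # Vx vj # _ \<Rightarrow>
          (if vj \<notin> V then pmf_of_set (Val ` VALS vj)
           else (let pre = filter (\<lambda>(u, q). u \<in> V) (pairs (drop 3 (cur_seq z)))
                 in if pre = [] then pmf_of_set (Val ` VALS vj)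
                    else return_pmf (Val (snd (last pre) + c (fst (last pre), vj)))))
      | Val q # _ \<Rightarrow> return_pmf Cm
      | _ \<Rightarrow> return_pmf Dlm)"

definition nll :: "real \<Rightarrow> ennreal" where
  "nll p = (if p = 0 then \<infinity> else ennreal (- ln p))"

definition train_loss :: "(nat \<Rightarrow> (('v, 'c) tok list \<times> ('v, 'c) tok list) pmf) \<Rightarrow> nat
                          \<Rightarrow> (('v, 'c) tok list \<Rightarrow> ('v, 'c) tok pmf) \<Rightarrow> ennreal" where
  "train_loss D K P =
     (\<Sum>k\<in>{1..<K}. \<integral>\<^sup>+ x. (\<Sum>t\<in>{1..<length (snd x)}.
          nll (pmf (P (fst x @ take t (snd x))) (snd x ! t))) \<partial>measure_pmf (D k))"

end

theory Submission
  imports Defs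
begin

(* A shot can be
   sampled entry by entry: the value of a vertex depends only on the last chain vertex drawn so
   far and its value, and its context tokens are drawn independently of everything else. The
   prefix of a training pair fixes the previous shots, hence the vertex list, and the entries of
   the query shot read so far, so the law of the next label token can be computed block by block.
   Inside the context tokens of a vertex, every unused context token and the vertex itself are
   equally likely (the number of tokens is uniform and they are drawn without replacement); then
   come "=", the value and ",". These are exactly the rules of P_prog, so P_prog is the
   conditional law of the next token given every prefix, and by Gibbs' inequality, applied to
   each prefix separately, it minimises the expected log-loss. *)

section \<open>Conditional laws\<close>

(* cond_law D E g Q: Q is the law of g under D conditioned on the event E. It is stated
   without division, so it holds trivially for null events and passes through bind_pmf. *)
definition cond_law :: "'a pmf \<Rightarrow> ('a \<Rightarrow> bool) \<Rightarrow> ('a \<Rightarrow> 'b) \<Rightarrow> 'b pmf \<Rightarrow> bool" where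
  "cond_law D E g Q \<longleftrightarrow>
     (\<forall>y. measure_pmf.prob D {x. E x \<and> g x = y} = pmf Q y * measure_pmf.prob D {x. E x})"

lemma measure_pmf_prob_bind:
  "measure_pmf.prob (bind_pmf M N) A = (\<integral>x. measure_pmf.prob (N x) A \<partial>M)"
proof -
  have "ennreal (measure_pmf.prob (bind_pmf M N) A) = (\<integral>\<^sup>+x. ennreal (measure_pmf.prob (N x) A) \<partial>M)"
    by (simp add: measure_pmf.emeasure_eq_measure[symmetric])
  also have "\<dots> = ennreal (\<integral>x. measure_pmf.prob (N x) A \<partial>M)"
    by (rule nn_integral_eq_integral) (auto intro!: measure_pmf.integrable_const_bound[where B=1])
  finally show ?thesis by (simp add: integral_nonneg_AE)
qed

lemma measure_pmf_prob_cong: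
  assumes "\<And>x. x \<in> set_pmf D \<Longrightarrow> x \<in> A \<longleftrightarrow> x \<in> B"
  shows "measure_pmf.prob D A = measure_pmf.prob D B"
  by (rule measure_prob_cong_0) (use assms in \<open>auto simp: set_pmf_iff\<close>)

lemma measure_pmf_prob_bind_determined:
  assumes "\<And>x \<omega>. x \<in> set_pmf C \<Longrightarrow> \<omega> \<in> set_pmf (K x) \<Longrightarrow> P \<omega> \<longleftrightarrow> P' x"
  shows "measure_pmf.prob (bind_pmf C K) {\<omega>. P \<omega>} = measure_pmf.prob C {x. P' x}"
proof -
  have "measure_pmf.prob (K x) {\<omega>. P \<omega>} = indicator {x. P' x} x" if "x \<in> set_pmf C" for x
  proof (cases "P' x")
    case True
    then have "measure_pmf.prob (K x) {\<omega>. P \<omega>} = measure_pmf.prob (K x) UNIV"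
      by (intro measure_pmf_prob_cong) (use assms that in auto)
    then show ?thesis using True by simp
  next
    case False
    then show ?thesis using assms that by (auto simp: measure_pmf_zero_iff)
  qed
  then have "measure_pmf.prob (bind_pmf C K) {\<omega>. P \<omega>} = (\<integral>x. indicator {x. P' x} x \<partial>C)"
    unfolding measure_pmf_prob_bind by (intro integral_cong_AE) (auto simp: AE_measure_pmf_iff)
  then show ?thesis by simp
qed

lemma cond_law_bind:
  assumes "\<And>r. r \<in> set_pmf R \<Longrightarrow> cond_law (C r) E g Q"
  shows "cond_law (bind_pmf R C) E g Q"
  unfolding cond_law_def
proof
  fix y
  have "measure_pmf.prob (bind_pmf R C) {x. E x \<and> g x = y}
       = (\<integral>r. pmf Q y * measure_pmf.prob (C r) {x. E x} \<partial>R)"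
    unfolding measure_pmf_prob_bind
    by (rule integral_cong_AE) (auto simp: AE_measure_pmf_iff assms[unfolded cond_law_def])
  also have "\<dots> = pmf Q y * measure_pmf.prob (bind_pmf R C) {x. E x}"
    unfolding measure_pmf_prob_bind by simp
  finally show "measure_pmf.prob (bind_pmf R C) {x. E x \<and> g x = y}
      = pmf Q y * measure_pmf.prob (bind_pmf R C) {x. E x}" .
qed

lemma cond_law_map_pmf:
  "cond_law (map_pmf f D) E g Q \<longleftrightarrow> cond_law D (\<lambda>x. E (f x)) (\<lambda>x. g (f x)) Q"
  unfolding cond_law_def by (simp add: measure_map_pmf vimage_def)

lemma cond_law_null:
  assumes "\<And>x. x \<in> set_pmf D \<Longrightarrow> \<not> E x"
  shows "cond_law D E g Q"
proof -
  have "measure_pmf.prob D {x. E x \<and> g x = y} = 0" for y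
    using assms by (subst measure_pmf_zero_iff) auto
  moreover have "measure_pmf.prob D {x. E x} = 0"
    using assms by (subst measure_pmf_zero_iff) auto
  ultimately show ?thesis unfolding cond_law_def by simp
qed

lemma cond_law_cong:
  assumes "\<And>x. x \<in> set_pmf D \<Longrightarrow> E x \<longleftrightarrow> E' x"
    and "\<And>x. x \<in> set_pmf D \<Longrightarrow> E x \<Longrightarrow> g x = g' x"
  shows "cond_law D E g Q \<longleftrightarrow> cond_law D E' g' Q"
proof -
  have "measure_pmf.prob D {x. E x \<and> g x = y} = measure_pmf.prob D {x. E' x \<and> g' x = y}" for y
    by (rule measure_pmf_prob_cong) (use assms in auto)
  moreover have "measure_pmf.prob D {x. E x} = measure_pmf.prob D {x. E' x}"
    by (rule measure_pmf_prob_cong) (use assms in auto)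
  ultimately show ?thesis unfolding cond_law_def by simp
qed

lemma cond_law_return:
  assumes "\<And>x. x \<in> set_pmf D \<Longrightarrow> E x \<Longrightarrow> g x = y0"
  shows "cond_law D E g (return_pmf y0)"
  unfolding cond_law_def
proof
  fix y
  show "measure_pmf.prob D {x. E x \<and> g x = y} = pmf (return_pmf y0) y * measure_pmf.prob D {x. E x}"
  proof (cases "y = y0")
    case True
    then show ?thesis by (simp add: pmf_return) (rule measure_pmf_prob_cong, use assms in auto)
  next
    case False
    then show ?thesis using assms by (simp add: pmf_return measure_pmf_zero_iff) blast
  qed
qed

lemma cond_law_bind_determined:
  assumes "\<And>x \<omega>. x \<in> set_pmf C \<Longrightarrow> \<omega> \<in> set_pmf (K x) \<Longrightarrow> E \<omega> \<longleftrightarrow> E' x"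
    and "\<And>x \<omega>. x \<in> set_pmf C \<Longrightarrow> \<omega> \<in> set_pmf (K x) \<Longrightarrow> E' x \<Longrightarrow> g \<omega> = g' x"
    and "cond_law C E' g' Q"
  shows "cond_law (bind_pmf C K) E g Q"
proof -
  have "measure_pmf.prob (bind_pmf C K) {\<omega>. E \<omega> \<and> g \<omega> = y} = measure_pmf.prob C {x. E' x \<and> g' x = y}" for y
    by (rule measure_pmf_prob_bind_determined) (metis assms(1,2))
  moreover have "measure_pmf.prob (bind_pmf C K) {\<omega>. E \<omega>} = measure_pmf.prob C {x. E' x}"
    by (rule measure_pmf_prob_bind_determined) (use assms(1) in blast)
  ultimately show ?thesis using assms(3) unfolding cond_law_def by simp
qed

lemma cond_law_bind_indep:
  assumes "\<And>q. q \<in> set_pmf A \<Longrightarrow> measure_pmf.prob (K q) {x. E x} = e"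
    and "\<And>q x. q \<in> set_pmf A \<Longrightarrow> x \<in> set_pmf (K q) \<Longrightarrow> E x \<Longrightarrow> g x = G q"
  shows "cond_law (bind_pmf A K) E g (map_pmf G A)"
  unfolding cond_law_def
proof
  fix y
  have "measure_pmf.prob (K q) {x. E x \<and> g x = y} = indicator {q. G q = y} q * e"
    if "q \<in> set_pmf A" for q
  proof (cases "G q = y")
    case True
    then have "measure_pmf.prob (K q) {x. E x \<and> g x = y} = measure_pmf.prob (K q) {x. E x}"
      by (intro measure_pmf_prob_cong) (use assms(2) that in auto)
    then show ?thesis using True assms(1) that by simp
  next
    case False
    then show ?thesis using assms(2) that by (auto simp: measure_pmf_zero_iff)
  qed
  then have "measure_pmf.prob (bind_pmf A K) {x. E x \<and> g x = y} = (\<integral>q. indicator {q. G q = y} q * e \<partial>A)"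
    unfolding measure_pmf_prob_bind by (intro integral_cong_AE) (auto simp: AE_measure_pmf_iff)
  also have "\<dots> = pmf (map_pmf G A) y * e"
    by (simp add: pmf_map vimage_def)
  also have "e = measure_pmf.prob (bind_pmf A K) {x. E x}"
    unfolding measure_pmf_prob_bind
    by (subst integral_cong_AE[where g="\<lambda>_. e"]) (auto simp: AE_measure_pmf_iff assms(1))
  finally show "measure_pmf.prob (bind_pmf A K) {x. E x \<and> g x = y}
      = pmf (map_pmf G A) y * measure_pmf.prob (bind_pmf A K) {x. E x}" .
qed

lemma cond_law_map_result:
  assumes "cond_law D E g Q" and "inj h"
  shows "cond_law D E (\<lambda>x. h (g x)) (map_pmf h Q)"
  unfolding cond_law_def
proof
  fix y
  show "measure_pmf.prob D {x. E x \<and> h (g x) = y} = pmf (map_pmf h Q) y * measure_pmf.prob D {x. E x}"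
  proof (cases "y \<in> range h")
    case True
    then obtain y' where "y = h y'" by blast
    then show ?thesis using assms by (simp add: pmf_map_inj' inj_eq cond_law_def)
  next
    case False
    then have "{x. E x \<and> h (g x) = y} = {}" and "pmf (map_pmf h Q) y = 0"
      by (auto simp: pmf_eq_0_set_pmf)
    then show ?thesis by (simp only:) simp
  qed
qed

lemma cond_law_the_Some:
  assumes "cond_law D E g (map_pmf Some Q)"
  shows "\<forall>x \<in> set_pmf D. E x \<longrightarrow> g x \<noteq> None"
    and "cond_law D E (\<lambda>x. the (g x)) Q"
proof -
  have "pmf (map_pmf Some Q) None = 0"
    by (auto simp: pmf_eq_0_set_pmf)
  then have "measure_pmf.prob D {x. E x \<and> g x = None} = 0"
    using assms by (simp add: cond_law_def)
  then show notNone: "\<forall>x \<in> set_pmf D. E x \<longrightarrow> g x \<noteq> None"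
    by (auto simp: measure_pmf_zero_iff)
  have "measure_pmf.prob D {x. E x \<and> the (g x) = y} = measure_pmf.prob D {x. E x \<and> g x = Some y}" for y
    by (rule measure_pmf_prob_cong) (use notNone in auto)
  then show "cond_law D E (\<lambda>x. the (g x)) Q"
    using assms by (simp add: cond_law_def pmf_map_inj')
qed

lemma cond_law_pmf_of_setI:
  assumes "finite S" and "S \<noteq> {}"
    and "\<And>x. x \<in> set_pmf D \<Longrightarrow> E x \<Longrightarrow> g x \<in> S"
    and "\<And>y. y \<in> S \<Longrightarrow> measure_pmf.prob D {x. E x \<and> g x = y} = e"
  shows "cond_law D E g (pmf_of_set S)"
proof -
  have "measure_pmf.prob D {x. E x} = measure_pmf.prob D (\<Union>y\<in>S. {x. E x \<and> g x = y})"
    by (rule measure_pmf_prob_cong) (use assms(3) in auto)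
  also have "\<dots> = (\<Sum>y\<in>S. measure_pmf.prob D {x. E x \<and> g x = y})"
    by (rule measure_pmf.finite_measure_finite_Union) (auto simp: assms(1) disjoint_family_on_def)
  also have "\<dots> = card S * e"
    using assms(4) by simp
  finally have PE: "measure_pmf.prob D {x. E x} = card S * e" .
  show ?thesis
    unfolding cond_law_def
  proof
    fix y
    show "measure_pmf.prob D {x. E x \<and> g x = y} = pmf (pmf_of_set S) y * measure_pmf.prob D {x. E x}"
    proof (cases "y \<in> S")
      case True
      then show ?thesis using assms PE by (simp add: card_gt_0_iff)
    next
      case False
      then have "measure_pmf.prob D {x. E x \<and> g x = y} = 0"
        using assms(3) by (auto simp: measure_pmf_zero_iff)
      then show ?thesis using False assms(1,2) by simp
    qed
  qed
qed

lemma measure_pmf_prob_cond_pmf: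
  assumes "set_pmf D \<inter> A \<noteq> {}"
  shows "measure_pmf.prob (cond_pmf D A) B = measure_pmf.prob D (B \<inter> A) / measure_pmf.prob D A"
proof -
  have "ennreal (measure_pmf.prob (cond_pmf D A) B) = emeasure (measure_pmf (cond_pmf D A)) B"
    by (simp add: measure_pmf.emeasure_eq_measure)
  also have "\<dots> = emeasure (uniform_measure (measure_pmf D) A) B"
    by (simp add: cond_pmf.rep_eq[OF assms])
  also have "\<dots> = emeasure D (B \<inter> A) / emeasure D A"
    by (simp add: emeasure_uniform_measure Int_commute)
  also have "\<dots> = ennreal (measure_pmf.prob D (B \<inter> A) / measure_pmf.prob D A)"
    using measure_measure_pmf_not_zero[OF assms]
    by (simp add: measure_pmf.emeasure_eq_measure divide_ennreal measure_nonneg zero_less_measure_iff)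
  finally show ?thesis by (simp add: ennreal_inj)
qed

lemma cond_law_imp_map_cond_pmf:
  assumes "cond_law D E g Q" and "x0 \<in> set_pmf D" and "E x0"
  shows "map_pmf g (cond_pmf D {x. E x}) = Q"
proof (rule pmf_eqI)
  fix y
  have ne: "set_pmf D \<inter> {x. E x} \<noteq> {}" using assms by auto
  have pos: "measure_pmf.prob D {x. E x} > 0" using assms measure_pmf_posI by fastforce
  have "pmf (map_pmf g (cond_pmf D {x. E x})) y = measure_pmf.prob (cond_pmf D {x. E x}) (g -` {y})"
    by (simp add: pmf_map)
  also have "\<dots> = measure_pmf.prob D {x. E x \<and> g x = y} / measure_pmf.prob D {x. E x}"
    unfolding measure_pmf_prob_cond_pmf[OF ne] by (simp add: vimage_def Collect_conj_eq Int_commute)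
  also have "\<dots> = pmf Q y" using assms(1) pos unfolding cond_law_def by simp
  finally show "pmf (map_pmf g (cond_pmf D {x. E x})) y = pmf Q y" .
qed

section \<open>Context tokens\<close>

definition distinct_lists :: "'a set \<Rightarrow> nat \<Rightarrow> 'a list set" where
  "distinct_lists A l = {xs. distinct xs \<and> set xs \<subseteq> A \<and> length xs = l}"

lemma finite_distinct_lists: "finite A \<Longrightarrow> finite (distinct_lists A l)"
  unfolding distinct_lists_def
  by (rule finite_subset[OF _ finite_lists_length_eq[of A l]]) auto

lemma card_distinct_lists:
  assumes "finite A" and "l \<le> card A"
  shows "real (card (distinct_lists A l)) = fact (card A) / fact (card A - l)"
proof -
  have "card (distinct_lists A l) = \<Prod>{card A - l + 1 .. card A}"
    using card_lists_distinct_length_eq[OF assms] unfolding distinct_lists_def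
    by (simp add: conj_commute conj_left_commute)
  moreover have "(fact (card A) :: nat) = fact (card A - l) * \<Prod>{card A - l + 1 .. card A}"
    using fact_eq_fact_times[of "card A - l" "card A"] assms(2) by simp
  then have "(fact (card A) :: real) = fact (card A - l) * real (\<Prod>{card A - l + 1 .. card A})"
    by (metis of_nat_fact of_nat_mult)
  ultimately show ?thesis
    by (simp add: field_simps)
qed

lemma distinct_lists_nonempty:
  assumes "finite A" and "l \<le> card A"
  shows "distinct_lists A l \<noteq> {}"
proof -
  obtain xs where "set xs = A" "distinct xs" using finite_distinct_list[OF assms(1)] by blast
  then have "take l xs \<in> distinct_lists A l"
    using assms by (auto simp: distinct_lists_def distinct_card dest: in_set_takeD)
  then show ?thesis by blast
qed

lemma distinct_lists_with_prefix:
  assumes "p \<in> distinct_lists A a" and "a \<le> l"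
  shows "{xs \<in> distinct_lists A l. take a xs = p} = (\<lambda>ys. p @ ys) ` distinct_lists (A - set p) (l - a)"
proof (intro equalityI subsetI)
  fix xs assume "xs \<in> {xs \<in> distinct_lists A l. take a xs = p}"
  then have xs: "distinct xs" "set xs \<subseteq> A" "length xs = l" "take a xs = p"
    by (auto simp: distinct_lists_def)
  then have "set p \<inter> set (drop a xs) = {}"
    by (metis append_take_drop_id disjoint_iff distinct_append)
  then have "drop a xs \<in> distinct_lists (A - set p) (l - a)"
    using xs by (auto simp: distinct_lists_def dest: in_set_dropD)
  moreover have "xs = p @ drop a xs" using xs(4) by (metis append_take_drop_id)
  ultimately show "xs \<in> (\<lambda>ys. p @ ys) ` distinct_lists (A - set p) (l - a)" by blast
qed (use assms in \<open>auto simp: distinct_lists_def\<close>)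

lemma prob_uniform_distinct_lists_prefix:
  assumes "finite A" and "p \<in> distinct_lists A a" and "a \<le> l" and "l \<le> card A"
  shows "measure_pmf.prob (pmf_of_set (distinct_lists A l)) {xs. take a xs = p}
           = fact (card A - a) / fact (card A)"
proof -
  have "card (set p) = a" "set p \<subseteq> A"
    using assms(2) by (auto simp: distinct_lists_def distinct_card)
  then have cA: "card (A - set p) = card A - a"
    using assms(1) by (simp add: card_Diff_subset finite_subset)
  have "card {xs \<in> distinct_lists A l. take a xs = p} = card (distinct_lists (A - set p) (l - a))"
    unfolding distinct_lists_with_prefix[OF assms(2,3)] by (simp add: card_image inj_on_def)
  then have "measure_pmf.prob (pmf_of_set (distinct_lists A l)) {xs. take a xs = p}
        = real (card (distinct_lists (A - set p) (l - a))) / real (card (distinct_lists A l))"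
    using distinct_lists_nonempty[OF assms(1,4)] finite_distinct_lists[OF assms(1)]
    by (simp add: measure_pmf_of_set Int_def)
  also have "\<dots> = (fact (card A - a) / fact (card A - l)) / (fact (card A) / fact (card A - l))"
    using assms cA by (simp add: card_distinct_lists)
  also have "\<dots> = fact (card A - a) / fact (card A)"
    by (simp add: field_simps)
  finally show ?thesis .
qed

lemma ctx_pmf_eq_bind:
  "ctx_pmf CONT v = bind_pmf (pmf_of_set {1..card (CONT v)}) (\<lambda>l. pmf_of_set (distinct_lists (CONT v) l))"
  unfolding ctx_pmf_def distinct_lists_def ..

lemma set_ctx_pmf:
  assumes "finite (CONT v)" and "CONT v \<noteq> {}"
  shows "set_pmf (ctx_pmf CONT v) = (\<Union>l\<in>{1..card (CONT v)}. distinct_lists (CONT v) l)"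
proof -
  have "{1..card (CONT v)} \<noteq> {}" using assms by (simp add: card_gt_0_iff Suc_le_eq)
  then show ?thesis
    using assms unfolding ctx_pmf_eq_bind
    by (simp add: set_pmf_of_set finite_distinct_lists distinct_lists_nonempty)
qed

lemma prob_ctx_pmf:
  assumes "finite (CONT v)" and "CONT v \<noteq> {}"
  shows "measure_pmf.prob (ctx_pmf CONT v) X
    = (\<Sum>l\<in>{1..card (CONT v)}. measure_pmf.prob (pmf_of_set (distinct_lists (CONT v) l)) X) / card (CONT v)"
proof -
  have "{1..card (CONT v)} \<noteq> {}" using assms by (simp add: card_gt_0_iff Suc_le_eq)
  then show ?thesis unfolding ctx_pmf_eq_bind measure_pmf_prob_bind
    by (simp add: integral_pmf_of_set)
qed

lemma set_pmf_uniform_distinct_lists: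
  "finite A \<Longrightarrow> l \<le> card A \<Longrightarrow> set_pmf (pmf_of_set (distinct_lists A l)) = distinct_lists A l"
  by (simp add: finite_distinct_lists distinct_lists_nonempty)

lemma prob_ctx_pmf_prefix:
  assumes "finite (CONT v)" and "q \<in> distinct_lists (CONT v) b" and "1 \<le> b"
  shows "measure_pmf.prob (ctx_pmf CONT v) {cs. take b cs = q}
           = (card (CONT v) + 1 - b) * (fact (card (CONT v) - b) / fact (card (CONT v))) / card (CONT v)"
proof -
  define n where "n = card (CONT v)"
  have "b \<le> n" "CONT v \<noteq> {}"
    using assms(2,3) by (auto simp: n_def distinct_lists_def distinct_card[symmetric] card_mono[OF assms(1)])
  have "measure_pmf.prob (pmf_of_set (distinct_lists (CONT v) l)) {cs. take b cs = q}
          = (if b \<le> l then fact (n - b) / fact n else 0)" if "l \<in> {1..n}" for l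
  proof (cases "b \<le> l")
    case True
    then show ?thesis
      using prob_uniform_distinct_lists_prefix[OF assms(1,2)] that by (simp add: n_def)
  next
    case False
    then have "set_pmf (pmf_of_set (distinct_lists (CONT v) l)) \<inter> {cs. take b cs = q} = {}"
      using that assms(2) set_pmf_uniform_distinct_lists[OF assms(1), of l]
      by (auto simp: n_def distinct_lists_def)
    then show ?thesis using False by (simp add: measure_pmf_zero_iff)
  qed
  then have "(\<Sum>l\<in>{1..n}. measure_pmf.prob (pmf_of_set (distinct_lists (CONT v) l)) {cs. take b cs = q})
        = (\<Sum>l\<in>{1..n}. if b \<le> l then fact (n - b) / fact n else 0)"
    by simp
  also have "\<dots> = (\<Sum>l\<in>{l \<in> {1..n}. b \<le> l}. fact (n - b) / fact n)"
    by (rule sum.inter_filter[symmetric]) simp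
  also have "{l \<in> {1..n}. b \<le> l} = {b..n}"
    using assms(3) by auto
  finally show ?thesis
    using assms(3) prob_ctx_pmf[of CONT v, OF assms(1) \<open>CONT v \<noteq> {}\<close>] by (simp add: n_def of_nat_diff)
qed

lemma prob_ctx_pmf_singleton:
  assumes "finite (CONT v)" and "p \<in> distinct_lists (CONT v) a" and "1 \<le> a"
  shows "measure_pmf.prob (ctx_pmf CONT v) {p} = fact (card (CONT v) - a) / fact (card (CONT v)) / card (CONT v)"
proof -
  define n where "n = card (CONT v)"
  have "a \<le> n" "CONT v \<noteq> {}"
    using assms(2,3) by (auto simp: n_def distinct_lists_def distinct_card[symmetric] card_mono[OF assms(1)])
  have "measure_pmf.prob (pmf_of_set (distinct_lists (CONT v) l)) {p}
          = (if l = a then fact (n - a) / fact n else 0)" if "l \<in> {1..n}" for l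
  proof (cases "l = a")
    case True
    have "measure_pmf.prob (pmf_of_set (distinct_lists (CONT v) a)) {p}
        = measure_pmf.prob (pmf_of_set (distinct_lists (CONT v) a)) {cs. take a cs = p}"
      using assms(2) set_pmf_uniform_distinct_lists[OF assms(1), of a] \<open>a \<le> n\<close>
      by (intro measure_pmf_prob_cong) (auto simp: n_def distinct_lists_def)
    then show ?thesis
      using True prob_uniform_distinct_lists_prefix[OF assms(1,2)] \<open>a \<le> n\<close> by (simp add: n_def)
  next
    case False
    then show ?thesis
      using that assms(2) set_pmf_uniform_distinct_lists[OF assms(1), of l]
      by (auto simp: n_def distinct_lists_def measure_pmf_zero_iff)
  qed
  then show ?thesis
    using assms(3) \<open>a \<le> n\<close> prob_ctx_pmf[of CONT v, OF assms(1) \<open>CONT v \<noteq> {}\<close>] by (simp add: n_def)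
qed

lemma take_Suc_eq_snoc_iff:
  assumes "length p = a"
  shows "take (Suc a) cs = p @ [x] \<longleftrightarrow> take a cs = p \<and> a < length cs \<and> cs ! a = x"
proof
  assume h: "take (Suc a) cs = p @ [x]"
  then have "length (take (Suc a) cs) = Suc a" using assms by simp
  then have "a < length cs" by simp
  then show "take a cs = p \<and> a < length cs \<and> cs ! a = x"
    using h by (simp add: take_Suc_conv_app_nth)
qed (simp add: take_Suc_conv_app_nth)

lemma ctx_pmf_next_token_mem:
  assumes "finite (CONT v)" and "CONT v \<noteq> {}"
    and "cs \<in> set_pmf (ctx_pmf CONT v)" and "take a cs = p"
  shows "(if a < length cs then Ctx (cs ! a) else Vx v) \<in> Ctx ` (CONT v - set p) \<union> (if p = [] then {} else {Vx v})"
proof -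
  have cs: "distinct cs" "set cs \<subseteq> CONT v" "cs \<noteq> []"
    using assms(3) set_ctx_pmf[of CONT v, OF assms(1,2)] by (auto simp: distinct_lists_def)
  show ?thesis
  proof (cases "a < length cs")
    case True
    then have "cs ! a \<notin> set (take a cs)"
      using cs(1) by (auto simp: in_set_conv_nth nth_eq_iff_index_eq)
    then show ?thesis using True cs(2) assms(4) by (auto intro: nth_mem)
  next
    case False
    then show ?thesis using assms(4) cs(3) by auto
  qed
qed

lemma prob_ctx_pmf_next_token:
  assumes fin: "finite (CONT v)" and p: "p \<in> distinct_lists (CONT v) a"
    and y: "y \<in> Ctx ` (CONT v - set p) \<union> (if p = [] then {} else {Vx v})"
  shows "measure_pmf.prob (ctx_pmf CONT v) {cs. take a cs = p \<and> (if a < length cs then Ctx (cs ! a) else Vx v) = y}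
           = fact (card (CONT v) - a) / fact (card (CONT v)) / card (CONT v)"
proof (cases "y = Vx v")
  case True
  then have "1 \<le> a" and "{cs. take a cs = p \<and> (if a < length cs then Ctx (cs ! a) else Vx v) = y} = {p}"
    using y p by (auto simp: Suc_le_eq distinct_lists_def split: if_splits)
  then show ?thesis
    using prob_ctx_pmf_singleton[of CONT v, OF fin p] by simp
next
  case False
  define n where "n = card (CONT v)"
  obtain x where x: "y = Ctx x" "x \<in> CONT v - set p" using False y by (auto split: if_splits)
  have "length p = a" using p by (simp add: distinct_lists_def)
  then have "take a cs = p \<and> (if a < length cs then Ctx (cs ! a) else Vx v) = y
      \<longleftrightarrow> take (a + 1) cs = p @ [x]" for cs
    using take_Suc_eq_snoc_iff[of p a cs x] x(1) by auto
  then have "{cs. take a cs = p \<and> (if a < length cs then Ctx (cs ! a) else Vx v) = y}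
      = {cs. take (a + 1) cs = p @ [x]}"
    by blast
  moreover have "p @ [x] \<in> distinct_lists (CONT v) (a + 1)"
    using p x by (auto simp: distinct_lists_def)
  moreover have "a < n"
  proof -
    have "card (set (p @ [x])) \<le> n"
      using fin x(2) p unfolding n_def by (intro card_mono) (auto simp: distinct_lists_def)
    moreover have "card (set (p @ [x])) = a + 1"
      using x(2) p by (simp add: distinct_lists_def distinct_card)
    ultimately show ?thesis by simp
  qed
  moreover have "real (n - a) * fact (n - (a + 1)) = fact (n - a)"
  proof -
    have "n - a = Suc (n - (a + 1))" using \<open>a < n\<close> by simp
    then show ?thesis by (metis fact_Suc)
  qed
  ultimately show ?thesis
    using prob_ctx_pmf_prefix[of CONT v "p @ [x]" "a + 1", OF fin] by (simp add: n_def)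
qed

lemma cond_law_ctx_pmf_next:
  assumes fin: "finite (CONT v)" and ne: "CONT v \<noteq> {}" and p: "p \<in> distinct_lists (CONT v) a"
  shows "cond_law (ctx_pmf CONT v) (\<lambda>cs. take a cs = p)
           (\<lambda>cs. if a < length cs then Ctx (cs ! a) else Vx v)
           (pmf_of_set (Ctx ` (CONT v - set p) \<union> (if p = [] then {} else {Vx v})))"
  by (rule cond_law_pmf_of_setI[OF _ _ ctx_pmf_next_token_mem[of CONT v, OF fin ne]
      prob_ctx_pmf_next_token[of CONT v, OF fin p]])
     (use fin ne in auto)

section \<open>Sampling a shot entry by entry\<close>

definition chain_upd :: "'v set \<Rightarrow> ('v \<times> int) option \<Rightarrow> 'v \<Rightarrow> int \<Rightarrow> ('v \<times> int) option" where
  "chain_upd V s v q = (if v \<in> V then Some (v, q) else s)"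

definition value_pmf :: "'v set \<Rightarrow> ('v \<times> 'v \<Rightarrow> int) \<Rightarrow> ('v \<Rightarrow> int set) \<Rightarrow> ('v \<times> int) option \<Rightarrow> 'v \<Rightarrow> int pmf"
  where
  "value_pmf V c VALS s v =
     (if v \<in> V then (case s of None \<Rightarrow> pmf_of_set (VALS v) | Some (u, p) \<Rightarrow> return_pmf (p + c (u, v)))
      else pmf_of_set (VALS v))"

(* s is the last chain vertex drawn so far, with its value. *)
fun shot_gen :: "'v set \<Rightarrow> ('v \<times> 'v \<Rightarrow> int) \<Rightarrow> ('v \<Rightarrow> int set) \<Rightarrow> ('v \<Rightarrow> 'c set) \<Rightarrow> ('v \<times> int) option
                  \<Rightarrow> 'v list \<Rightarrow> ('v \<times> int \<times> 'c list) list pmf" where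
  "shot_gen V c VALS CONT s [] = return_pmf []"
| "shot_gen V c VALS CONT s (v # vs) =
     bind_pmf (value_pmf V c VALS s v) (\<lambda>q. bind_pmf (ctx_pmf CONT v) (\<lambda>cs.
       map_pmf (Cons (v, q, cs)) (shot_gen V c VALS CONT (chain_upd V s v q) vs)))"

lemma sample_vals_Cons:
  "sample_vals V c VALS s (v # vs)
     = bind_pmf (value_pmf V c VALS s v) (\<lambda>q. map_pmf (Cons q) (sample_vals V c VALS (chain_upd V s v q) vs))"
  by (cases s) (auto simp: value_pmf_def chain_upd_def bind_return_pmf)

lemma shot_gen_eq_sample:
  "shot_gen V c VALS CONT s vs =
     bind_pmf (sample_vals V c VALS s vs)
       (\<lambda>qs. map_pmf (\<lambda>cs. zip vs (zip qs cs)) (seq_pmf (map (ctx_pmf CONT) vs)))"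
proof (induction vs arbitrary: s)
  case Nil
  then show ?case by (simp add: bind_return_pmf)
next
  case (Cons v vs)
  show ?case
    unfolding sample_vals_Cons shot_gen.simps Cons.IH
    by (simp del: sample_vals.simps add: bind_assoc_pmf bind_return_pmf map_bind_pmf bind_map_pmf
          map_pmf_comp)
       (subst bind_commute_pmf[where A = "ctx_pmf CONT v"], simp add: map_bind_pmf map_pmf_comp)
qed

lemma shot_pmf_eq_shot_gen: "shot_pmf V c VALS CONT vs = shot_gen V c VALS CONT None vs"
  unfolding shot_pmf_def shot_gen_eq_sample ..

lemma set_pmf_shot_gen_Cons:
  "r \<in> set_pmf (shot_gen V c VALS CONT s (v # vs)) \<longleftrightarrow>
   (\<exists>q cs r'. r = (v, q, cs) # r' \<and> q \<in> set_pmf (value_pmf V c VALS s v) \<and> cs \<in> set_pmf (ctx_pmf CONT v)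
      \<and> r' \<in> set_pmf (shot_gen V c VALS CONT (chain_upd V s v q) vs))"
  by auto

lemma map_fst_shot_gen: "r \<in> set_pmf (shot_gen V c VALS CONT s vs) \<Longrightarrow> map fst r = vs"
  by (induction vs arbitrary: s r) auto

section \<open>The program on the current sequence\<close>

definition shot_body :: "('v \<times> int \<times> 'c list) list \<Rightarrow> ('v, 'c) tok list" where
  "shot_body sh = join_with Cm (map block sh)"

lemma shot_body_Nil [simp]: "shot_body [] = []"
  by (simp add: shot_body_def)

lemma shot_body_Cons:
  "shot_body ((v, q, cs) # r) = map Ctx cs @ Vx v # Eq # Val q # (if r = [] then [] else Cm # shot_body r)"
  by (cases r) (simp_all add: shot_body_def)

lemma proc_shot_eq: "proc_shot sh = [Vx (fst (last sh)), Eq, Qu] @ shot_body sh"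
  by (simp add: proc_shot_def shot_body_def)

definition chain_state :: "'v set \<Rightarrow> ('v \<times> int) option \<Rightarrow> ('v \<times> int) list \<Rightarrow> ('v \<times> int) option" where
  "chain_state V s ps = fold (\<lambda>(v, q) s. chain_upd V s v q) ps s"

lemma chain_state_eq:
  "chain_state V s ps =
     (let pre = filter (\<lambda>(u, q). u \<in> V) ps in if pre = [] then s else Some (last pre))"
  by (induction ps rule: rev_induct) (auto simp: chain_state_def chain_upd_def Let_def)

(* The rules of P_prog, with what they read off the sentence as parameters: the chain state s
   (for rule (iv)), the vertex list vs of a previous shot and the number i of vertices of the
   current sequence (rule (i)), the trailing run of context tokens (rule (ii)) and the reversed
   sentence rz. *)
definition prog_rule :: "'v set \<Rightarrow> ('v \<times> 'v \<Rightarrow> int) \<Rightarrow> ('v \<Rightarrow> int set) \<Rightarrow> ('v \<Rightarrow> 'c set)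
    \<Rightarrow> ('v \<times> int) option \<Rightarrow> 'v list \<Rightarrow> nat \<Rightarrow> ('v, 'c) tok list \<Rightarrow> ('v, 'c) tok list
    \<Rightarrow> ('v, 'c) tok pmf" where
  "prog_rule V c VALS CONT s vs i run rz =
     (case rz of
        Cm # _ \<Rightarrow> pmf_of_set (Ctx ` CONT (vs ! i))
      | Ctx x # _ \<Rightarrow>
          (let vj = (THE v. x \<in> CONT v) in pmf_of_set ((Ctx ` CONT vj \<union> {Vx vj}) - set run))
      | Vx _ # _ \<Rightarrow> return_pmf Eq
      | Eq # Vx vj # _ \<Rightarrow> map_pmf Val (value_pmf V c VALS s vj)
      | Val _ # _ \<Rightarrow> return_pmf Cm
      | _ \<Rightarrow> return_pmf Dlm)"

lemma prog_rule_take_2: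
  "prog_rule V c VALS CONT s vs i run (take 2 rz) = prog_rule V c VALS CONT s vs i run rz"
proof (cases "length rz \<le> 2")
  case False
  then obtain y1 y2 r where "rz = y1 # y2 # r"
    by (auto simp: numeral_2_eq_2 Suc_le_length_iff not_le simp flip: Suc_le_eq)
  then show ?thesis by (cases y1; cases y2) (simp_all add: prog_rule_def)
qed simp

lemma prog_rule_cong:
  "take 2 rz = take 2 rz' \<Longrightarrow> prog_rule V c VALS CONT s vs i run rz = prog_rule V c VALS CONT s vs i run rz'"
  by (metis prog_rule_take_2)

lemma map_value_pmf_chain_state:
  assumes "\<And>v. finite (VALS v) \<and> VALS v \<noteq> {}"
  shows "map_pmf Val (value_pmf V c VALS (chain_state V None ps) vj) =
     (if vj \<notin> V then pmf_of_set (Val ` VALS vj)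
      else if filter (\<lambda>(u, q). u \<in> V) ps = [] then pmf_of_set (Val ` VALS vj)
      else return_pmf (Val (snd (last (filter (\<lambda>(u, q). u \<in> V) ps))
                             + c (fst (last (filter (\<lambda>(u, q). u \<in> V) ps)), vj))))"
proof -
  have "map_pmf Val (pmf_of_set (VALS vj)) = pmf_of_set (Val ` VALS vj)"
    using assms[of vj] by (intro map_pmf_of_set_inj) (auto simp: inj_on_def)
  then show ?thesis
    by (auto simp: value_pmf_def chain_state_eq Let_def split: prod.split)
qed

lemma P_prog_eq_prog_rule:
  assumes VALS: "\<And>v. finite (VALS v) \<and> VALS v \<noteq> {}"
  shows "P_prog V c VALS CONT z
    = prog_rule V c VALS CONT (chain_state V None (pairs (drop 3 (cur_seq z))))
        (verts (drop 3 (prev_shot z))) (length (verts (drop 3 (cur_seq z))))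
        (takeWhile is_ctx (rev z)) (rev z)"
  by (simp only: P_prog_def prog_rule_def Let_def map_value_pmf_chain_state[OF VALS]
      cong: list.case_cong tok.case_cong)

(* The program on a sentence whose current sequence has body w (the part after "v_L = ?");
   the leading Cm lets the empty body behave like the position after a comma. *)
definition body_prog :: "'v set \<Rightarrow> ('v \<times> 'v \<Rightarrow> int) \<Rightarrow> ('v \<Rightarrow> int set) \<Rightarrow> ('v \<Rightarrow> 'c set)
    \<Rightarrow> ('v \<times> int) option \<Rightarrow> 'v list \<Rightarrow> ('v, 'c) tok list \<Rightarrow> ('v, 'c) tok pmf" where
  "body_prog V c VALS CONT s vs w =
     prog_rule V c VALS CONT (chain_state V s (pairs w)) vs (length (verts w))
       (takeWhile is_ctx (rev w)) (rev (Cm # w))"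

lemma verts_map_Ctx [simp]: "verts (map Ctx cs @ r) = verts r"
  by (induction cs) auto

lemma pairs_map_Ctx [simp]: "pairs (map Ctx cs @ r) = pairs r"
  by (induction cs) auto

lemma takeWhile_is_ctx_map_Ctx [simp]: "takeWhile is_ctx (map Ctx cs) = map Ctx cs"
  by (induction cs) auto

lemma body_prog_ctx:
  assumes disj: "\<And>v w. v \<noteq> w \<Longrightarrow> CONT v \<inter> CONT w = {}" and "set p \<subseteq> CONT v"
  shows "body_prog V c VALS CONT s (v # vs) (map Ctx p)
           = pmf_of_set (Ctx ` (CONT v - set p) \<union> (if p = [] then {} else {Vx v}))"
proof (cases p rule: rev_exhaust)
  case Nil
  then show ?thesis by (simp add: body_prog_def prog_rule_def)
next
  case (snoc ps x)
  have "(THE v. x \<in> CONT v) = v"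
    using assms snoc by (intro the_equality) auto
  then show ?thesis
    using snoc by (simp add: body_prog_def prog_rule_def rev_map) (intro arg_cong[where f = pmf_of_set], auto)
qed

lemma body_prog_after_vertex: "body_prog V c VALS CONT s vs (map Ctx cs @ [Vx v]) = return_pmf Eq"
  by (simp add: body_prog_def prog_rule_def)

lemma body_prog_after_eq:
  "body_prog V c VALS CONT s vs (map Ctx cs @ [Vx v, Eq]) = map_pmf Val (value_pmf V c VALS s v)"
  by (simp add: body_prog_def prog_rule_def chain_state_def)

lemma body_prog_after_value: "body_prog V c VALS CONT s vs (map Ctx cs @ [Vx v, Eq, Val q]) = return_pmf Cm"
  by (simp add: body_prog_def prog_rule_def)

lemma prog_rule_Cons_Suc:
  "prog_rule V c VALS CONT s (v # vs) (Suc i) run rz = prog_rule V c VALS CONT s vs i run rz"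
  by (simp only: prog_rule_def nth_Cons_Suc)

lemma body_prog_next_block:
  "body_prog V c VALS CONT s (v # vs) (map Ctx cs @ Vx v # Eq # Val q # Cm # w)
     = body_prog V c VALS CONT (chain_upd V s v q) vs w"
proof -
  have "chain_state V s (pairs (map Ctx cs @ Vx v # Eq # Val q # Cm # w))
          = chain_state V (chain_upd V s v q) (pairs w)"
    by (simp add: chain_state_def)
  moreover have "takeWhile is_ctx (rev (map Ctx cs @ Vx v # Eq # Val q # Cm # w)) = takeWhile is_ctx (rev w)"
    by (simp add: takeWhile_tail)
  moreover have "prog_rule V c VALS CONT s' (v # vs) (Suc i) run (rev (Cm # map Ctx cs @ Vx v # Eq # Val q # Cm # w))
      = prog_rule V c VALS CONT s' vs i run (rev (Cm # w))" for s' i run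
  proof (cases "w = []")
    case True
    then show ?thesis unfolding prog_rule_Cons_Suc by (simp add: prog_rule_def)
  next
    case False
    then obtain y r where "rev w = y # r" by (cases "rev w") auto
    then have "take 2 (rev (Cm # map Ctx cs @ Vx v # Eq # Val q # Cm # w)) = take 2 (rev (Cm # w))"
      by (cases r) (simp_all add: numeral_2_eq_2)
    then show ?thesis
      unfolding prog_rule_Cons_Suc by (rule prog_rule_cong)
  qed
  ultimately show ?thesis by (simp add: body_prog_def)
qed

section \<open>The next-token law within a shot\<close>

(* Laws of nth_opt record at once that the next token exists on the conditioning event. *)
definition nth_opt :: "'a list \<Rightarrow> nat \<Rightarrow> 'a option" where
  "nth_opt xs n = (if n < length xs then Some (xs ! n) else None)"

lemma take_Ctx_Vx_eq_iff:
  "take N (map Ctx cs @ Vx v # R) = map Ctx cs0 @ Vx v' # R0 \<longleftrightarrow>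
     cs = cs0 \<and> v = v' \<and> length cs < N \<and> take (N - Suc (length cs)) R = R0"
proof (induction cs arbitrary: cs0 N)
  case Nil
  then show ?case by (cases cs0; cases N) auto
next
  case (Cons x cs)
  then show ?case by (cases cs0; cases N) auto
qed

lemma take_Ctx_Vx_eq_map_Ctx_iff:
  assumes "length p = N"
  shows "take N (map Ctx cs @ Vx v # R) = map Ctx p \<longleftrightarrow> take N cs = p"
proof (cases "N \<le> length cs")
  case True
  then have "take N (map Ctx cs @ Vx v # R) = map Ctx (take N cs)"
    by (simp add: take_map)
  then show ?thesis by (simp add: inj_map_eq_map inj_def)
next
  case False
  then obtain k where "N - length cs = Suc k"
    by (metis Suc_diff_Suc not_le)
  then have "Vx v \<in> set (take N (map Ctx cs @ Vx v # R))"
    using False by simp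
  moreover have "Vx v \<notin> set (map Ctx p)" by auto
  ultimately have "take N (map Ctx cs @ Vx v # R) \<noteq> map Ctx p" by metis
  moreover have "take N cs \<noteq> p" using False assms by auto
  ultimately show ?thesis by blast
qed

lemma cond_law_shot_gen_ctx:
  assumes CONT: "finite (CONT v)" "CONT v \<noteq> {}"
    and disj: "\<And>v w. v \<noteq> w \<Longrightarrow> CONT v \<inter> CONT w = {}"
    and p: "p \<in> distinct_lists (CONT v) N"
  shows "cond_law (shot_gen V c VALS CONT s (v # vs)) (\<lambda>r. take N (shot_body r) = map Ctx p)
           (\<lambda>r. nth_opt (shot_body r) N) (map_pmf Some (body_prog V c VALS CONT s (v # vs) (map Ctx p)))"
proof -
  have lp: "length p = N" and sp: "set p \<subseteq> CONT v"
    using p by (auto simp: distinct_lists_def)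
  have "cond_law (bind_pmf (ctx_pmf CONT v)
          (\<lambda>cs. map_pmf (Cons (v, q, cs)) (shot_gen V c VALS CONT (chain_upd V s v q) vs)))
        (\<lambda>r. take N (shot_body r) = map Ctx p) (\<lambda>r. nth_opt (shot_body r) N)
        (map_pmf Some (pmf_of_set (Ctx ` (CONT v - set p) \<union> (if p = [] then {} else {Vx v}))))" for q
  proof (rule cond_law_bind_determined)
    fix cs r
    assume "r \<in> set_pmf (map_pmf (Cons (v, q, cs)) (shot_gen V c VALS CONT (chain_upd V s v q) vs))"
    then obtain r' where r: "r = (v, q, cs) # r'" by auto
    show "take N (shot_body r) = map Ctx p \<longleftrightarrow> take N cs = p"
      unfolding r shot_body_Cons by (rule take_Ctx_Vx_eq_map_Ctx_iff[OF lp])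
    assume "take N cs = p"
    then have "N \<le> length cs" using lp by auto
    then show "nth_opt (shot_body r) N = Some (if N < length cs then Ctx (cs ! N) else Vx v)"
      by (auto simp: r shot_body_Cons nth_opt_def nth_append)
  next
    show "cond_law (ctx_pmf CONT v) (\<lambda>cs. take N cs = p)
            (\<lambda>cs. Some (if N < length cs then Ctx (cs ! N) else Vx v))
            (map_pmf Some (pmf_of_set (Ctx ` (CONT v - set p) \<union> (if p = [] then {} else {Vx v}))))"
      by (rule cond_law_map_result[OF cond_law_ctx_pmf_next[of CONT v, OF CONT p]]) simp
  qed
  then have "cond_law (shot_gen V c VALS CONT s (v # vs)) (\<lambda>r. take N (shot_body r) = map Ctx p)
      (\<lambda>r. nth_opt (shot_body r) N)
      (map_pmf Some (pmf_of_set (Ctx ` (CONT v - set p) \<union> (if p = [] then {} else {Vx v}))))"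
    unfolding shot_gen.simps by (rule cond_law_bind)
  moreover have "body_prog V c VALS CONT s (v # vs) (map Ctx p)
      = pmf_of_set (Ctx ` (CONT v - set p) \<union> (if p = [] then {} else {Vx v}))"
    using disj sp by (rule body_prog_ctx)
  ultimately show ?thesis by simp
qed

lemma set_pmf_shot_gen_ConsE:
  assumes "r \<in> set_pmf (shot_gen V c VALS CONT s (v # vs))"
  obtains q cs r' where "r = (v, q, cs) # r'" and "q \<in> set_pmf (value_pmf V c VALS s v)"
    and "cs \<in> set_pmf (ctx_pmf CONT v)" and "r' \<in> set_pmf (shot_gen V c VALS CONT (chain_upd V s v q) vs)"
    and "shot_body r = map Ctx cs @ Vx v # Eq # Val q # (if vs = [] then [] else Cm # shot_body r')"
proof -
  obtain q cs r' where r: "r = (v, q, cs) # r'" and q: "q \<in> set_pmf (value_pmf V c VALS s v)"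
    and cs: "cs \<in> set_pmf (ctx_pmf CONT v)"
    and r': "r' \<in> set_pmf (shot_gen V c VALS CONT (chain_upd V s v q) vs)"
    using assms unfolding set_pmf_shot_gen_Cons by blast
  have "r' = [] \<longleftrightarrow> vs = []" using map_fst_shot_gen[OF r'] by auto
  then show ?thesis by (intro that[OF r q cs r']) (simp add: r shot_body_Cons)
qed

lemma cond_law_shot_gen_after_vertex:
  "cond_law (shot_gen V c VALS CONT s (v # vs))
     (\<lambda>r. take (Suc (length cs0)) (shot_body r) = map Ctx cs0 @ [Vx v])
     (\<lambda>r. nth_opt (shot_body r) (Suc (length cs0))) (return_pmf (Some Eq))"
proof (rule cond_law_return)
  fix r assume "r \<in> set_pmf (shot_gen V c VALS CONT s (v # vs))"
    and "take (Suc (length cs0)) (shot_body r) = map Ctx cs0 @ [Vx v]"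
  then show "nth_opt (shot_body r) (Suc (length cs0)) = Some Eq"
    by (elim set_pmf_shot_gen_ConsE) (simp only: take_Ctx_Vx_eq_iff, auto simp: nth_opt_def nth_append)
qed

lemma cond_law_shot_gen_after_eq:
  "cond_law (shot_gen V c VALS CONT s (v # vs))
     (\<lambda>r. take (length cs0 + 2) (shot_body r) = map Ctx cs0 @ [Vx v, Eq])
     (\<lambda>r. nth_opt (shot_body r) (length cs0 + 2)) (map_pmf Some (map_pmf Val (value_pmf V c VALS s v)))"
proof -
  let ?K = "\<lambda>q. bind_pmf (ctx_pmf CONT v)
              (\<lambda>cs. map_pmf (Cons (v, q, cs)) (shot_gen V c VALS CONT (chain_upd V s v q) vs))"
  have event: "take (length cs0 + 2) (shot_body r) = map Ctx cs0 @ [Vx v, Eq] \<longleftrightarrow> cs = cs0"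
    and next_tok: "cs = cs0 \<Longrightarrow> nth_opt (shot_body r) (length cs0 + 2) = Some (Val q)"
    if rin: "r \<in> set_pmf (map_pmf (Cons (v, q, cs)) X)" for q cs r X
  proof -
    obtain r' where r: "r = (v, q, cs) # r'" using rin by auto
    show "take (length cs0 + 2) (shot_body r) = map Ctx cs0 @ [Vx v, Eq] \<longleftrightarrow> cs = cs0"
      unfolding r shot_body_Cons by (simp only: take_Ctx_Vx_eq_iff) auto
    show "cs = cs0 \<Longrightarrow> nth_opt (shot_body r) (length cs0 + 2) = Some (Val q)"
      by (simp add: r shot_body_Cons nth_opt_def nth_append)
  qed
  have "cond_law (bind_pmf (value_pmf V c VALS s v) ?K)
     (\<lambda>r. take (length cs0 + 2) (shot_body r) = map Ctx cs0 @ [Vx v, Eq])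
     (\<lambda>r. nth_opt (shot_body r) (length cs0 + 2)) (map_pmf (\<lambda>q. Some (Val q)) (value_pmf V c VALS s v))"
  proof (rule cond_law_bind_indep)
    fix q
    show "measure_pmf.prob (?K q) {r. take (length cs0 + 2) (shot_body r) = map Ctx cs0 @ [Vx v, Eq]}
          = measure_pmf.prob (ctx_pmf CONT v) {cs. cs = cs0}"
      by (rule measure_pmf_prob_bind_determined) (rule event)
  next
    fix q r
    assume "r \<in> set_pmf (?K q)" and E: "take (length cs0 + 2) (shot_body r) = map Ctx cs0 @ [Vx v, Eq]"
    then obtain cs where "r \<in> set_pmf (map_pmf (Cons (v, q, cs)) (shot_gen V c VALS CONT (chain_upd V s v q) vs))"
      by auto
    then show "nth_opt (shot_body r) (length cs0 + 2) = Some (Val q)"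
      using event E next_tok by blast
  qed
  then show ?thesis by (simp add: map_pmf_comp)
qed

lemma cond_law_shot_gen_after_value:
  assumes "vs \<noteq> []"
  shows "cond_law (shot_gen V c VALS CONT s (v # vs))
     (\<lambda>r. take (length cs0 + 3) (shot_body r) = map Ctx cs0 @ [Vx v, Eq, Val q0])
     (\<lambda>r. nth_opt (shot_body r) (length cs0 + 3)) (return_pmf (Some Cm))"
proof (rule cond_law_return)
  fix r assume "r \<in> set_pmf (shot_gen V c VALS CONT s (v # vs))"
  then obtain q cs r' where r: "r = (v, q, cs) # r'"
    and "r' \<in> set_pmf (shot_gen V c VALS CONT (chain_upd V s v q) vs)"
    unfolding set_pmf_shot_gen_Cons by blast
  then have "r' \<noteq> []" using assms map_fst_shot_gen by fastforce
  moreover assume "take (length cs0 + 3) (shot_body r) = map Ctx cs0 @ [Vx v, Eq, Val q0]"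
  ultimately show "nth_opt (shot_body r) (length cs0 + 3) = Some Cm"
    unfolding r by (simp only: shot_body_Cons take_Ctx_Vx_eq_iff) (auto simp: nth_opt_def nth_append)
qed

lemma cond_law_shot_gen_next_block:
  assumes "vs \<noteq> []"
    and IH: "cond_law (shot_gen V c VALS CONT (chain_upd V s v q0) vs)
               (\<lambda>r. take N (shot_body r) = w) (\<lambda>r. nth_opt (shot_body r) N) Q"
  shows "cond_law (shot_gen V c VALS CONT s (v # vs))
     (\<lambda>r. take (length cs0 + 4 + N) (shot_body r) = map Ctx cs0 @ Vx v # Eq # Val q0 # Cm # w)
     (\<lambda>r. nth_opt (shot_body r) (length cs0 + 4 + N)) Q"
  unfolding shot_gen.simps
proof (intro cond_law_bind)
  fix q cs
  let ?G = "shot_gen V c VALS CONT (chain_upd V s v q) vs"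
  have body: "shot_body ((v, q, cs) # r') = map Ctx cs @ Vx v # Eq # Val q # Cm # shot_body r'"
    if "r' \<in> set_pmf ?G" for r'
    using that assms(1) map_fst_shot_gen[OF that] by (auto simp: shot_body_Cons)
  have nth: "nth_opt (map Ctx cs @ Vx v # Eq # Val q # Cm # X) (length cs + 4 + N) = nth_opt X N" for X
    by (simp add: nth_opt_def nth_append)
  show "cond_law (map_pmf (Cons (v, q, cs)) ?G)
     (\<lambda>r. take (length cs0 + 4 + N) (shot_body r) = map Ctx cs0 @ Vx v # Eq # Val q0 # Cm # w)
     (\<lambda>r. nth_opt (shot_body r) (length cs0 + 4 + N)) Q"
  proof (cases "q = q0 \<and> cs = cs0")
    case True
    have "cond_law ?G (\<lambda>r'. take (length cs0 + 4 + N) (shot_body ((v, q, cs) # r'))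
                            = map Ctx cs0 @ Vx v # Eq # Val q0 # Cm # w)
            (\<lambda>r'. nth_opt (shot_body ((v, q, cs) # r')) (length cs0 + 4 + N)) Q
          \<longleftrightarrow> cond_law ?G (\<lambda>r. take N (shot_body r) = w) (\<lambda>r. nth_opt (shot_body r) N) Q"
    proof (rule cond_law_cong)
      fix r' assume "r' \<in> set_pmf ?G"
      note b = body[OF this]
      show "take (length cs0 + 4 + N) (shot_body ((v, q, cs) # r'))
              = map Ctx cs0 @ Vx v # Eq # Val q0 # Cm # w \<longleftrightarrow> take N (shot_body r') = w"
        unfolding b take_Ctx_Vx_eq_iff using True by (auto simp: numeral_eq_Suc)
      show "nth_opt (shot_body ((v, q, cs) # r')) (length cs0 + 4 + N) = nth_opt (shot_body r') N"
        unfolding b using True nth by simp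
    qed
    then show ?thesis using IH True by (simp add: cond_law_map_pmf)
  next
    case False
    then show ?thesis
      unfolding cond_law_map_pmf
      by (intro cond_law_null) (simp only: body take_Ctx_Vx_eq_iff, auto simp: numeral_eq_Suc)
  qed
qed

lemma cond_law_shot_gen_next:
  assumes CONT: "\<And>v. finite (CONT v) \<and> CONT v \<noteq> {}"
    and disj: "\<And>v w. v \<noteq> w \<Longrightarrow> CONT v \<inter> CONT w = {}"
  shows "r0 \<in> set_pmf (shot_gen V c VALS CONT s vs) \<Longrightarrow> N < length (shot_body r0) \<Longrightarrow>
    cond_law (shot_gen V c VALS CONT s vs) (\<lambda>r. take N (shot_body r) = take N (shot_body r0))
      (\<lambda>r. nth_opt (shot_body r) N) (map_pmf Some (body_prog V c VALS CONT s vs (take N (shot_body r0))))"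
proof (induction vs arbitrary: s r0 N)
  case Nil
  then show ?case by simp
next
  case (Cons v vs)
  obtain q0 cs0 r0' where cs0: "cs0 \<in> set_pmf (ctx_pmf CONT v)"
    and r0': "r0' \<in> set_pmf (shot_gen V c VALS CONT (chain_upd V s v q0) vs)"
    and body0: "shot_body r0 = map Ctx cs0 @ Vx v # Eq # Val q0 # (if vs = [] then [] else Cm # shot_body r0')"
    using Cons.prems(1) by (rule set_pmf_shot_gen_ConsE)
  have "N \<le> length cs0 \<or> N = Suc (length cs0) \<or> N = length cs0 + 2 \<or> N = length cs0 + 3
        \<or> (\<exists>N'. N = length cs0 + 4 + N')"
    by presburger
  then consider (in_ctx) "N \<le> length cs0" | (after_vertex) "N = Suc (length cs0)" | (after_eq) "N = length cs0 + 2"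
    | (after_value) "N = length cs0 + 3" | (next_block) N' where "N = length cs0 + 4 + N'"
    by blast
  then show ?case
  proof cases
    case in_ctx
    have "take N cs0 \<in> distinct_lists (CONT v) N"
      using cs0 in_ctx set_ctx_pmf[of CONT v] CONT[of v]
      by (auto simp: distinct_lists_def dest: in_set_takeD)
    moreover have "take N (shot_body r0) = map Ctx (take N cs0)"
      using in_ctx by (simp add: body0 take_map)
    ultimately show ?thesis
      using cond_law_shot_gen_ctx[of CONT v] CONT disj by simp
  next
    case after_vertex
    then show ?thesis
      using cond_law_shot_gen_after_vertex by (simp add: body0 body_prog_after_vertex)
  next
    case after_eq
    then show ?thesis
      using cond_law_shot_gen_after_eq by (simp add: body0 body_prog_after_eq numeral_eq_Suc)
  next
    case after_value
    then have "vs \<noteq> []" using Cons.prems(2) by (auto simp: body0 split: if_splits)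
    then show ?thesis
      using after_value cond_law_shot_gen_after_value by (simp add: body0 body_prog_after_value numeral_eq_Suc)
  next
    case next_block
    then have "vs \<noteq> []" and N': "N' < length (shot_body r0')"
      using Cons.prems(2) by (auto simp: body0 split: if_splits)
    moreover have "take N (shot_body r0) = map Ctx cs0 @ Vx v # Eq # Val q0 # Cm # take N' (shot_body r0')"
      using next_block \<open>vs \<noteq> []\<close> by (simp add: body0 numeral_eq_Suc)
    ultimately show ?thesis
      using cond_law_shot_gen_next_block[OF _ Cons.IH[OF r0' N']] next_block
      by (simp add: body_prog_next_block)
  qed
qed

section \<open>Few-shot documents\<close>

lemma append_Cons_eq_iff_first:
  "d \<notin> set u \<Longrightarrow> d \<notin> set u0 \<Longrightarrow> u @ d # R = u0 @ d # R0 \<longleftrightarrow> u = u0 \<and> R = R0"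
proof (induction u arbitrary: u0)
  case Nil
  then show ?case by (cases u0) auto
next
  case (Cons a u)
  then show ?case by (cases u0) auto
qed

lemma join_with_Cons_append:
  "join_with d (u # L) @ d # X = u @ d # (if L = [] then X else join_with d L @ d # X)"
  by (cases L) auto

lemma join_with_append_eq_iff:
  assumes "length L = length L0" and "\<forall>u\<in>set L. d \<notin> set u" and "\<forall>u\<in>set L0. d \<notin> set u"
    and "L \<noteq> []"
  shows "join_with d L @ d # X = join_with d L0 @ d # X0 \<longleftrightarrow> L = L0 \<and> X = X0"
  using assms
proof (induction L arbitrary: L0)
  case Nil
  then show ?case by simp
next
  case (Cons u L)
  then obtain u0 L0' where L0: "L0 = u0 # L0'" by (cases L0) auto
  show ?case
    using Cons.prems Cons.IH[of L0'] unfolding L0 join_with_Cons_append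
    by (auto simp: append_Cons_eq_iff_first)
qed

lemma takeWhile_join_with_append:
  "d \<notin> set u \<Longrightarrow> takeWhile (\<lambda>x. x \<noteq> d) (join_with d (u # L) @ d # X) = u"
  unfolding join_with_Cons_append by (auto simp: takeWhile_tail)

lemma map_Ctx_Vx_eq_iff:
  "map Ctx cs @ Vx v # R = map Ctx cs' @ Vx v' # R' \<longleftrightarrow> cs = cs' \<and> v = v' \<and> R = R'"
proof (induction cs arbitrary: cs')
  case Nil
  then show ?case by (cases cs') auto
next
  case (Cons x cs)
  then show ?case by (cases cs') auto
qed

lemma Dlm_notin_shot_body: "Dlm \<notin> set (shot_body sh)"
  by (induction sh rule: induct_list012) (auto simp: shot_body_Cons)

lemma verts_shot_body: "verts (shot_body sh) = map fst sh"
  by (induction sh rule: induct_list012) (auto simp: shot_body_Cons)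

definition query_prefix :: "nat \<Rightarrow> ('v \<times> int \<times> 'c list) list \<Rightarrow> ('v, 'c) tok list" where
  "query_prefix t sh = [Vx (fst (last sh)), Eq, Qu] @ block (hd sh) @ Cm # take t (shot_body (tl sh))"

lemma inp_lab_snoc:
  assumes "length a = k"
  shows "fst (inp_lab k (a @ [b])) @ take t (snd (inp_lab k (a @ [b])))
           = join_with Dlm (map proc_shot a) @ Dlm # query_prefix t b"
    and "snd (inp_lab k (a @ [b])) = shot_body (tl b)"
  using assms by (simp_all add: inp_lab_def shot_body_def query_prefix_def Let_def nth_append)

lemma P_prog_eq_body_prog:
  assumes VALS: "\<And>v. finite (VALS v) \<and> VALS v \<noteq> {}"
    and z: "z = join_with Dlm (map proc_shot (sh # a)) @ Dlm # [Vx L, Eq, Qu] @ bw"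
    and bw: "Dlm \<notin> set bw" "Cm \<in> set bw" "2 \<le> length bw"
  shows "P_prog V c VALS CONT z = body_prog V c VALS CONT None (map fst sh) bw"
proof -
  have "rev z = rev bw @ [Qu, Eq, Vx L, Dlm] @ rev (join_with Dlm (map proc_shot (sh # a)))"
    by (simp add: z)
  moreover have "takeWhile (\<lambda>x. x \<noteq> Dlm) (rev bw @ X) = rev bw @ takeWhile (\<lambda>x. x \<noteq> Dlm) X" for X
    by (rule takeWhile_append2) (use bw(1) in auto)
  ultimately have "takeWhile (\<lambda>x. x \<noteq> Dlm) (rev z) = rev bw @ [Qu, Eq, Vx L]"
    by simp
  then have "drop 3 (cur_seq z) = bw" by (simp add: cur_seq_def)
  moreover have "verts (drop 3 (prev_shot z)) = map fst sh"
    unfolding z prev_shot_def list.map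
    by (subst takeWhile_join_with_append) (simp_all add: proc_shot_eq Dlm_notin_shot_body verts_shot_body)
  moreover have "takeWhile is_ctx (rev z) = takeWhile is_ctx (rev bw)"
    using bw(2) by (auto simp: z in_set_conv_decomp takeWhile_tail)
  moreover have "take 2 (rev z) = take 2 (rev (Cm # bw))"
    using bw(3) by (simp add: z)
  ultimately show ?thesis
    unfolding P_prog_eq_prog_rule[OF VALS] body_prog_def by (simp add: prog_rule_cong)
qed

lemma seq_pmf_snoc: "seq_pmf (ps @ [p]) = bind_pmf (seq_pmf ps) (\<lambda>a. map_pmf (\<lambda>b. a @ [b]) p)"
  by (induction ps) (simp_all add: bind_return_pmf map_pmf_def bind_assoc_pmf map_bind_pmf)

lemma set_seq_pmf_replicate:
  "a \<in> set_pmf (seq_pmf (replicate k p)) \<Longrightarrow> length a = k \<and> set a \<subseteq> set_pmf p"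
  by (induction k arbitrary: a) fastforce+

lemma D_train_eq:
  "D_train V c VALS CONT \<sigma> k = bind_pmf \<sigma> (\<lambda>vs.
     bind_pmf (seq_pmf (replicate k (shot_gen V c VALS CONT None vs)))
       (\<lambda>a. map_pmf (\<lambda>b. inp_lab k (a @ [b])) (shot_gen V c VALS CONT None vs)))"
proof -
  have rep: "replicate (Suc k) p = replicate k p @ [p]" for p :: "'x pmf"
    by (simp add: replicate_append_same)
  show ?thesis
    unfolding D_train_def shot_pmf_eq_shot_gen rep seq_pmf_snoc by (simp add: map_bind_pmf map_pmf_comp)
qed

lemma cond_law_query_shot:
  assumes CONT: "\<And>v. finite (CONT v) \<and> CONT v \<noteq> {}"
    and disj: "\<And>v w. v \<noteq> w \<Longrightarrow> CONT v \<inter> CONT w = {}"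
    and sh0: "(v1, q1, cs1) # r0 \<in> set_pmf (shot_gen V c VALS CONT None (v1 # vs))"
    and t: "t < length (shot_body r0)"
  shows "cond_law (shot_gen V c VALS CONT None (v1 # vs))
           (\<lambda>b. query_prefix t b = query_prefix t ((v1, q1, cs1) # r0)) (\<lambda>b. nth_opt (shot_body (tl b)) t)
           (map_pmf Some (body_prog V c VALS CONT (chain_upd V None v1 q1) vs (take t (shot_body r0))))"
proof -
  let ?G = "\<lambda>q. shot_gen V c VALS CONT (chain_upd V None v1 q) vs"
  have r0: "r0 \<in> set_pmf (?G q1)" using sh0 by auto
  have "r0 \<noteq> []" using t by auto
  then have "vs \<noteq> []" using map_fst_shot_gen[OF r0] by auto
  have last_eq: "fst (last r) = last vs" if "r \<in> set_pmf (?G q)" for r q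
    using map_fst_shot_gen[OF that] \<open>vs \<noteq> []\<close> by (metis last_map map_is_Nil_conv)
  have event: "query_prefix t ((v1, q, cs) # r) = query_prefix t ((v1, q1, cs1) # r0)
      \<longleftrightarrow> q = q1 \<and> cs = cs1 \<and> take t (shot_body r) = take t (shot_body r0)"
    if "r \<in> set_pmf (?G q)" for q cs r
    using last_eq[OF that] last_eq[OF r0] map_fst_shot_gen[OF that] \<open>vs \<noteq> []\<close> \<open>r0 \<noteq> []\<close>
    by (auto simp: query_prefix_def map_Ctx_Vx_eq_iff)
  have IH: "cond_law (?G q1) (\<lambda>r. take t (shot_body r) = take t (shot_body r0)) (\<lambda>r. nth_opt (shot_body r) t)
           (map_pmf Some (body_prog V c VALS CONT (chain_upd V None v1 q1) vs (take t (shot_body r0))))"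
    by (rule cond_law_shot_gen_next[OF CONT disj r0 t])
  show ?thesis
    unfolding shot_gen.simps
  proof (intro cond_law_bind)
    fix q cs
    show "cond_law (map_pmf (Cons (v1, q, cs)) (?G q))
           (\<lambda>b. query_prefix t b = query_prefix t ((v1, q1, cs1) # r0)) (\<lambda>b. nth_opt (shot_body (tl b)) t)
           (map_pmf Some (body_prog V c VALS CONT (chain_upd V None v1 q1) vs (take t (shot_body r0))))"
    proof (cases "q = q1 \<and> cs = cs1")
      case True
      then show ?thesis using IH unfolding cond_law_map_pmf by (subst cond_law_cong) (auto simp: event)
    next
      case False
      then show ?thesis unfolding cond_law_map_pmf by (intro cond_law_null) (auto simp: event)
    qed
  qed
qed

lemma shot_gen_vertex_list_eq:
  assumes "set a \<subseteq> set_pmf (shot_gen V c VALS CONT None vs)"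
    and "set a0 \<subseteq> set_pmf (shot_gen V c VALS CONT None vs0)"
    and "a \<noteq> []" and "map proc_shot a = map proc_shot a0"
  shows "vs = vs0"
proof -
  obtain sh a' sh0 a0' where a: "a = sh # a'" and a0: "a0 = sh0 # a0'"
    using assms(3,4) by (cases a; cases a0) auto
  then have "shot_body sh = shot_body sh0"
    using assms(4) by (simp add: proc_shot_eq)
  then have "map fst sh = map fst sh0" by (metis verts_shot_body)
  moreover have "map fst sh = vs" and "map fst sh0 = vs0"
    using assms(1,2) a a0 by (auto intro: map_fst_shot_gen)
  ultimately show ?thesis by simp
qed

lemma P_prog_query_prefix:
  assumes VALS: "\<And>v. finite (VALS v) \<and> VALS v \<noteq> {}"
    and a0: "a0 \<noteq> []" "set a0 \<subseteq> set_pmf (shot_gen V c VALS CONT None (v1 # vs))"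
  shows "P_prog V c VALS CONT (join_with Dlm (map proc_shot a0) @ Dlm # query_prefix t ((v1, q1, cs1) # r0))
           = body_prog V c VALS CONT (chain_upd V None v1 q1) vs (take t (shot_body r0))"
proof -
  obtain sh a where a0_eq: "a0 = sh # a" using a0(1) by (cases a0) auto
  have "map fst sh = v1 # vs" using a0(2) a0_eq map_fst_shot_gen by auto
  moreover have "P_prog V c VALS CONT (join_with Dlm (map proc_shot a0) @ Dlm # query_prefix t ((v1, q1, cs1) # r0))
      = body_prog V c VALS CONT None (map fst sh) (block (v1, q1, cs1) @ Cm # take t (shot_body r0))"
    unfolding a0_eq
    by (rule P_prog_eq_body_prog[OF VALS]) (auto simp: query_prefix_def Dlm_notin_shot_body dest: in_set_takeD)
  ultimately show ?thesis by (simp add: body_prog_next_block)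
qed

lemma cond_law_D_train_next:
  assumes VALS: "\<And>v. finite (VALS v) \<and> VALS v \<noteq> {}"
    and CONT: "\<And>v. finite (CONT v) \<and> CONT v \<noteq> {}"
    and disj: "\<And>v w. v \<noteq> w \<Longrightarrow> CONT v \<inter> CONT w = {}"
    and k: "1 \<le> k"
    and supp: "(inp, lab) \<in> set_pmf (D_train V c VALS CONT \<sigma> k)"
    and t: "t < length lab"
  shows "cond_law (D_train V c VALS CONT \<sigma> k) (\<lambda>x. fst x @ take t (snd x) = inp @ take t lab)
           (\<lambda>x. nth_opt (snd x) t) (map_pmf Some (P_prog V c VALS CONT (inp @ take t lab)))"
proof -
  let ?G = "\<lambda>vs. shot_gen V c VALS CONT None vs"
  obtain vs0 a0 sh0 where a0: "a0 \<in> set_pmf (seq_pmf (replicate k (?G vs0)))"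
    and sh0: "sh0 \<in> set_pmf (?G vs0)" and x0: "inp_lab k (a0 @ [sh0]) = (inp, lab)"
    using supp unfolding D_train_eq by auto
  have la0: "length a0 = k" and a0G: "set a0 \<subseteq> set_pmf (?G vs0)"
    using set_seq_pmf_replicate[OF a0] by auto
  have lab: "lab = shot_body (tl sh0)"
    and z: "inp @ take t lab = join_with Dlm (map proc_shot a0) @ Dlm # query_prefix t sh0"
    using inp_lab_snoc(1)[OF la0, of sh0 t] inp_lab_snoc(2)[OF la0, of sh0] x0 by auto
  obtain v1 q1 cs1 r0 where sh0_eq: "sh0 = (v1, q1, cs1) # r0"
    using t lab by (cases sh0) auto
  have vs0: "vs0 = v1 # map fst r0" using map_fst_shot_gen[OF sh0] by (simp add: sh0_eq)
  have t0: "t < length (shot_body r0)" using t lab sh0_eq by simp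
  have "P_prog V c VALS CONT (inp @ take t lab)
      = body_prog V c VALS CONT (chain_upd V None v1 q1) (map fst r0) (take t (shot_body r0))"
    unfolding z sh0_eq by (rule P_prog_query_prefix[OF VALS]) (use a0G vs0 k la0 in auto)
  then have query: "cond_law (?G vs0) (\<lambda>b. query_prefix t b = query_prefix t sh0)
      (\<lambda>b. nth_opt (shot_body (tl b)) t) (map_pmf Some (P_prog V c VALS CONT (inp @ take t lab)))"
    unfolding vs0 sh0_eq using cond_law_query_shot[OF CONT disj sh0[unfolded sh0_eq vs0] t0] by simp
  show ?thesis
    unfolding D_train_eq
  proof (intro cond_law_bind)
    fix vs a assume "a \<in> set_pmf (seq_pmf (replicate k (?G vs)))"
    then have la: "length a = k" and aG: "set a \<subseteq> set_pmf (?G vs)"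
      by (auto dest: set_seq_pmf_replicate)
    have event: "fst (inp_lab k (a @ [b])) @ take t (snd (inp_lab k (a @ [b]))) = inp @ take t lab
        \<longleftrightarrow> map proc_shot a = map proc_shot a0 \<and> query_prefix t b = query_prefix t sh0" for b
      unfolding inp_lab_snoc(1)[OF la] z
      by (rule join_with_append_eq_iff) (use la la0 k in \<open>auto simp: proc_shot_eq Dlm_notin_shot_body\<close>)
    show "cond_law (map_pmf (\<lambda>b. inp_lab k (a @ [b])) (?G vs))
            (\<lambda>x. fst x @ take t (snd x) = inp @ take t lab) (\<lambda>x. nth_opt (snd x) t)
            (map_pmf Some (P_prog V c VALS CONT (inp @ take t lab)))"
    proof (cases "map proc_shot a = map proc_shot a0")
      case True
      moreover have "a \<noteq> []" using la k by auto
      ultimately have "vs = vs0" using shot_gen_vertex_list_eq[OF aG a0G] by blast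
      then show ?thesis
        unfolding cond_law_map_pmf event using True query by (simp add: inp_lab_snoc(2)[OF la])
    next
      case False
      then show ?thesis
        unfolding cond_law_map_pmf event by (intro cond_law_null) simp
    qed
  qed
qed

lemma length_label_D_train_same_prefix:
  assumes VALS: "\<And>v. finite (VALS v) \<and> VALS v \<noteq> {}"
    and CONT: "\<And>v. finite (CONT v) \<and> CONT v \<noteq> {}"
    and disj: "\<And>v w. v \<noteq> w \<Longrightarrow> CONT v \<inter> CONT w = {}"
    and k: "1 \<le> k"
    and supp: "(inp, lab) \<in> set_pmf (D_train V c VALS CONT \<sigma> k)"
    and t: "t < length lab"
    and x: "x \<in> set_pmf (D_train V c VALS CONT \<sigma> k)" "fst x @ take t (snd x) = inp @ take t lab"
  shows "t < length (snd x)"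
  using cond_law_the_Some(1)[OF cond_law_D_train_next[OF VALS CONT disj k supp t]] x
  by (auto simp: nth_opt_def split: if_splits)

lemma P_train_D_train_eq_P_prog:
  assumes VALS: "\<And>v. finite (VALS v) \<and> VALS v \<noteq> {}"
    and CONT: "\<And>v. finite (CONT v) \<and> CONT v \<noteq> {}"
    and disj: "\<And>v w. v \<noteq> w \<Longrightarrow> CONT v \<inter> CONT w = {}"
    and k: "1 \<le> k"
    and supp: "(inp, lab) \<in> set_pmf (D_train V c VALS CONT \<sigma> k)"
    and t: "t < length lab"
  shows "P_train (D_train V c VALS CONT \<sigma> k) t (inp @ take t lab) = P_prog V c VALS CONT (inp @ take t lab)"
proof -
  have "cond_law (D_train V c VALS CONT \<sigma> k) (\<lambda>x. fst x @ take t (snd x) = inp @ take t lab)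
          (\<lambda>x. snd x ! t) (P_prog V c VALS CONT (inp @ take t lab))"
    using cond_law_the_Some(2)[OF cond_law_D_train_next[OF VALS CONT disj k supp t]]
      length_label_D_train_same_prefix[OF VALS CONT disj k supp t]
    by (subst cond_law_cong) (auto simp: nth_opt_def)
  from cond_law_imp_map_cond_pmf[OF this supp] show ?thesis
    by (simp add: P_train_def case_prod_unfold)
qed

section \<open>Log-loss\<close>

lemma finite_set_pmf_shot_gen:
  assumes "\<And>v. finite (VALS v) \<and> VALS v \<noteq> {}" and "\<And>v. finite (CONT v) \<and> CONT v \<noteq> {}"
  shows "finite (set_pmf (shot_gen V c VALS CONT s vs))"
proof (induction vs arbitrary: s)
  case (Cons v vs)
  have "finite (set_pmf (value_pmf V c VALS s v))"
    using assms(1) by (auto simp: value_pmf_def split: option.splits)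
  moreover have "finite (set_pmf (ctx_pmf CONT v))"
    using assms(2)[of v] by (simp add: set_ctx_pmf finite_distinct_lists)
  ultimately show ?case using Cons.IH by (auto intro!: finite_UN_I finite_imageI)
qed simp

lemma finite_set_pmf_seq_pmf: "(\<And>p. p \<in> set ps \<Longrightarrow> finite (set_pmf p)) \<Longrightarrow> finite (set_pmf (seq_pmf ps))"
  by (induction ps) auto

lemma finite_set_pmf_D_train:
  fixes V :: "'v::finite set"
  assumes VALS: "\<And>v. finite (VALS v) \<and> VALS v \<noteq> {}" and CONT: "\<And>v. finite (CONT v) \<and> CONT v \<noteq> {}"
    and \<sigma>: "set_pmf \<sigma> \<subseteq> {vs. train_vlist V E M M' vs}"
  shows "finite (set_pmf (D_train V c VALS CONT \<sigma> k))"
proof -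
  have "set_pmf \<sigma> \<subseteq> {vs. length vs = M + M'}"
    using \<sigma> by (auto simp: train_vlist_def dest!: length_shuffles)
  then have "finite (set_pmf \<sigma>)" by (rule finite_subset) (rule finite_list_length)
  moreover have "finite (set_pmf (seq_pmf (replicate k (shot_gen V c VALS CONT None vs))))" for vs
    by (rule finite_set_pmf_seq_pmf) (use finite_set_pmf_shot_gen[OF VALS CONT] in auto)
  ultimately show ?thesis
    unfolding D_train_eq using finite_set_pmf_shot_gen[OF VALS CONT]
    by (auto intro!: finite_UN_I finite_imageI)
qed

lemma nn_integral_nll_pmf:
  assumes "finite (set_pmf p)" and "\<And>y. y \<in> set_pmf p \<Longrightarrow> 0 < pmf q y"
  shows "(\<integral>\<^sup>+ y. nll (pmf q y) \<partial>measure_pmf p) = ennreal (\<Sum>y\<in>set_pmf p. - ln (pmf q y) * pmf p y)"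
proof -
  have nonneg: "0 \<le> - ln (pmf q y)" for y
    using pmf_le_1[of q y] by (cases "pmf q y = 0") simp_all
  have "(\<integral>\<^sup>+ y. nll (pmf q y) \<partial>measure_pmf p) = (\<Sum>y\<in>set_pmf p. nll (pmf q y) * pmf p y)"
    by (rule nn_integral_measure_pmf_finite[OF assms(1)]) simp
  also have "\<dots> = (\<Sum>y\<in>set_pmf p. ennreal (- ln (pmf q y) * pmf p y))"
  proof (rule sum.cong)
    fix y assume "y \<in> set_pmf p"
    then have "nll (pmf q y) = ennreal (- ln (pmf q y))"
      using assms(2)[of y] by (simp add: nll_def)
    then show "nll (pmf q y) * ennreal (pmf p y) = ennreal (- ln (pmf q y) * pmf p y)"
      using nonneg[of y] by (metis ennreal_mult')
  qed simp
  also have "\<dots> = ennreal (\<Sum>y\<in>set_pmf p. - ln (pmf q y) * pmf p y)"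
    using nonneg by (intro sum_ennreal) (simp add: mult_nonpos_nonneg)
  finally show ?thesis .
qed

lemma sum_entropy_le_cross_entropy:
  assumes fin: "finite (set_pmf p)" and qpos: "\<And>y. y \<in> set_pmf p \<Longrightarrow> 0 < pmf q y"
  shows "(\<Sum>y\<in>set_pmf p. - ln (pmf p y) * pmf p y) \<le> (\<Sum>y\<in>set_pmf p. - ln (pmf q y) * pmf p y)"
proof -
  have ppos: "0 < pmf p y" if "y \<in> set_pmf p" for y
    using that by (simp add: pmf_positive)
  have "- ln (pmf p y) * pmf p y - - ln (pmf q y) * pmf p y \<le> pmf q y - pmf p y"
    if "y \<in> set_pmf p" for y
  proof -
    have "ln (pmf q y / pmf p y) \<le> pmf q y / pmf p y - 1"
      using qpos[OF that] ppos[OF that] by (intro ln_le_minus_one) simp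
    then have "pmf p y * ln (pmf q y / pmf p y) \<le> pmf q y - pmf p y"
      using ppos[OF that] by (simp add: field_simps)
    then show ?thesis
      using qpos[OF that] ppos[OF that] by (simp add: ln_div algebra_simps)
  qed
  then have "(\<Sum>y\<in>set_pmf p. - ln (pmf p y) * pmf p y) - (\<Sum>y\<in>set_pmf p. - ln (pmf q y) * pmf p y)
      \<le> (\<Sum>y\<in>set_pmf p. pmf q y) - (\<Sum>y\<in>set_pmf p. pmf p y)"
    unfolding sum_subtractf[symmetric] by (rule sum_mono)
  also have "\<dots> \<le> 0"
    using measure_measure_pmf_finite[OF fin, of q] measure_measure_pmf_finite[OF fin, of p]
      measure_pmf.prob_le_1[of q "set_pmf p"] measure_Int_set_pmf[of p UNIV] by simp
  finally show ?thesis by simp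
qed

lemma cross_entropy_ge_entropy:
  assumes fin: "finite (set_pmf p)"
  shows "(\<integral>\<^sup>+ y. nll (pmf p y) \<partial>measure_pmf p) \<le> (\<integral>\<^sup>+ y. nll (pmf q y) \<partial>measure_pmf p)"
proof (cases "\<exists>y\<in>set_pmf p. pmf q y = 0")
  case True
  then obtain y where y: "y \<in> set_pmf p" "pmf q y = 0" by blast
  have "\<infinity> = nll (pmf q y) * pmf p y"
    using y by (simp add: nll_def set_pmf_iff ennreal_mult_top)
  also have "\<dots> \<le> (\<Sum>x\<in>set_pmf p. nll (pmf q x) * pmf p x)"
    by (rule member_le_sum) (use y fin in auto)
  also have "\<dots> = (\<integral>\<^sup>+ y. nll (pmf q y) \<partial>measure_pmf p)"
    by (rule nn_integral_measure_pmf_finite[OF fin, symmetric]) simp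
  finally show ?thesis by (simp add: top_unique)
next
  case False
  then have qpos: "0 < pmf q y" if "y \<in> set_pmf p" for y
    using that pmf_nonneg[of q y] by fastforce
  then show ?thesis
    using sum_entropy_le_cross_entropy[OF fin qpos]
    by (simp add: nn_integral_nll_pmf[OF fin] pmf_positive ennreal_leI)
qed

lemma nn_integral_nll_cond_pmf_le:
  assumes fin: "finite (set_pmf D)"
    and fiber: "\<And>x x'. x \<in> set_pmf D \<Longrightarrow> x' \<in> set_pmf D \<Longrightarrow> prefix_of x' = prefix_of x \<Longrightarrow> A x \<Longrightarrow> A x'"
    and opt: "\<And>x. x \<in> set_pmf D \<Longrightarrow> A x \<Longrightarrow> R (prefix_of x) = map_pmf token_of (cond_pmf D {x'. prefix_of x' = prefix_of x})"
  shows "(\<integral>\<^sup>+x. (if A x then nll (pmf (R (prefix_of x)) (token_of x)) else 0) \<partial>measure_pmf D)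
           \<le> (\<integral>\<^sup>+x. (if A x then nll (pmf (P (prefix_of x)) (token_of x)) else 0) \<partial>measure_pmf D)"
proof -
  define C where "C z = cond_pmf D {x. prefix_of x = z}" for z
  define F where "F S x = (if A x then nll (pmf (S (prefix_of x)) (token_of x)) else 0)" for S x
  have split: "(\<integral>\<^sup>+x. F S x \<partial>measure_pmf D) = (\<integral>\<^sup>+z. (\<integral>\<^sup>+x. F S x \<partial>measure_pmf (C z)) \<partial>map_pmf prefix_of D)" for S
  proof -
    have "bind_pmf (map_pmf prefix_of D) C = D"
      unfolding C_def by (rule bind_cond_pmf_cancel) (auto simp: measure_map_pmf vimage_def)
    then show ?thesis by (metis nn_integral_bind_pmf)
  qed
  have "(\<integral>\<^sup>+x. F R x \<partial>measure_pmf (C z)) \<le> (\<integral>\<^sup>+x. F P x \<partial>measure_pmf (C z))"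
    if z: "z \<in> set_pmf (map_pmf prefix_of D)" for z
  proof -
    have setC: "set_pmf (C z) = set_pmf D \<inter> {x. prefix_of x = z}"
      using z unfolding C_def by (subst set_cond_pmf) auto
    show ?thesis
    proof (cases "\<exists>x1 \<in> set_pmf D. prefix_of x1 = z \<and> A x1")
      case True
      then obtain x1 where x1: "x1 \<in> set_pmf D" "prefix_of x1 = z" "A x1" by blast
      have "(\<integral>\<^sup>+x. F S x \<partial>measure_pmf (C z)) = (\<integral>\<^sup>+y. nll (pmf (S z) y) \<partial>map_pmf token_of (C z))" for S
        using x1 fiber setC by (auto simp: F_def intro!: nn_integral_cong_AE simp: AE_measure_pmf_iff)
      moreover have "R z = map_pmf token_of (C z)"
        using opt[OF x1(1,3)] x1(2) by (simp add: C_def)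
      moreover have "finite (set_pmf (map_pmf token_of (C z)))"
        using fin setC by simp
      ultimately show ?thesis
        using cross_entropy_ge_entropy by metis
    next
      case False
      then have "(\<integral>\<^sup>+x. F S x \<partial>measure_pmf (C z)) = 0" for S
        using setC by (subst nn_integral_cong_AE[where v = "\<lambda>_. 0"]) (auto simp: F_def AE_measure_pmf_iff)
      then show ?thesis by simp
    qed
  qed
  then show ?thesis
    unfolding F_def[symmetric] split by (intro nn_integral_mono_AE) (simp add: AE_measure_pmf_iff)
qed

lemma nn_integral_sum_atLeastLessThan_mono:
  fixes f g :: "nat \<Rightarrow> 'a \<Rightarrow> ennreal"
  assumes "\<And>t. (\<integral>\<^sup>+x. (if t \<in> {1..<n x} then f t x else 0) \<partial>measure_pmf D)
               \<le> (\<integral>\<^sup>+x. (if t \<in> {1..<n x} then g t x else 0) \<partial>measure_pmf D)"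
  shows "(\<integral>\<^sup>+x. (\<Sum>t\<in>{1..<n x}. f t x) \<partial>measure_pmf D) \<le> (\<integral>\<^sup>+x. (\<Sum>t\<in>{1..<n x}. g t x) \<partial>measure_pmf D)"
proof -
  have "(\<Sum>t\<in>{1..<m}. h t) = (\<Sum>t. if t \<in> {1..<m} then h t else 0)" for h :: "nat \<Rightarrow> ennreal" and m
    by (subst suminf_finite[of "{1..<m}"]) auto
  then have "(\<integral>\<^sup>+x. (\<Sum>t\<in>{1..<n x}. h t x) \<partial>measure_pmf D)
      = (\<Sum>t. \<integral>\<^sup>+x. (if t \<in> {1..<n x} then h t x else 0) \<partial>measure_pmf D)" for h
    by (simp add: nn_integral_suminf)
  then show ?thesis
    using assms by (simp add: suminf_le)
qed

lemma D_train_next_token_loss_le: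
  fixes V :: "'v::finite set"
  assumes VALS: "\<And>v. finite (VALS v) \<and> VALS v \<noteq> {}"
    and CONT: "\<And>v. finite (CONT v) \<and> CONT v \<noteq> {}"
    and disj: "\<And>v w. v \<noteq> w \<Longrightarrow> CONT v \<inter> CONT w = {}"
    and \<sigma>: "set_pmf \<sigma> \<subseteq> {vs. train_vlist V E M M' vs}"
    and k: "1 \<le> k"
  shows "(\<integral>\<^sup>+x. (if t \<in> {1..<length (snd x)}
                   then nll (pmf (P_prog V c VALS CONT (fst x @ take t (snd x))) (snd x ! t)) else 0)
                 \<partial>measure_pmf (D_train V c VALS CONT \<sigma> k))
         \<le> (\<integral>\<^sup>+x. (if t \<in> {1..<length (snd x)}
                   then nll (pmf (P (fst x @ take t (snd x))) (snd x ! t)) else 0)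
                 \<partial>measure_pmf (D_train V c VALS CONT \<sigma> k))"
proof (rule nn_integral_nll_cond_pmf_le[where A = "\<lambda>x. t \<in> {1..<length (snd x)}"
      and prefix_of = "\<lambda>x. fst x @ take t (snd x)" and token_of = "\<lambda>x. snd x ! t"])
  show "finite (set_pmf (D_train V c VALS CONT \<sigma> k))"
    by (rule finite_set_pmf_D_train[OF VALS CONT \<sigma>])
next
  fix x x' assume "x \<in> set_pmf (D_train V c VALS CONT \<sigma> k)" "x' \<in> set_pmf (D_train V c VALS CONT \<sigma> k)"
    and "fst x' @ take t (snd x') = fst x @ take t (snd x)" and "t \<in> {1..<length (snd x)}"
  then show "t \<in> {1..<length (snd x')}"
    using length_label_D_train_same_prefix[OF VALS CONT disj k, where inp = "fst x" and lab = "snd x"]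
    by auto
next
  fix x assume "x \<in> set_pmf (D_train V c VALS CONT \<sigma> k)" and "t \<in> {1..<length (snd x)}"
  then show "P_prog V c VALS CONT (fst x @ take t (snd x)) = map_pmf (\<lambda>x. snd x ! t)
      (cond_pmf (D_train V c VALS CONT \<sigma> k) {x'. fst x' @ take t (snd x') = fst x @ take t (snd x)})"
    using P_train_D_train_eq_P_prog[OF VALS CONT disj k, where inp = "fst x" and lab = "snd x"] by (simp add: P_train_def case_prod_unfold)
qed

theorem lemma1:
  fixes V :: "'v::finite set" and E :: "('v \<times> 'v) set" and c :: "'v \<times> 'v \<Rightarrow> int"
    and VALS :: "'v \<Rightarrow> int set" and CONT :: "'v \<Rightarrow> 'c set"
    and M M' K k t :: nat and \<sigma> :: "'v list pmf"
    and inp lab :: "('v, 'c) tok list"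
  assumes E_sub: "E \<subseteq> V \<times> V"
    and VALS: "\<And>v. finite (VALS v) \<and> VALS v \<noteq> {}"
    and CONT: "\<And>v. finite (CONT v) \<and> CONT v \<noteq> {}"
    and CONT_disj: "\<And>v w. v \<noteq> w \<Longrightarrow> CONT v \<inter> CONT w = {}"
    and op_maps: "\<And>a b q. (a, b) \<in> E \<Longrightarrow> q \<in> VALS a \<Longrightarrow> q + c (a, b) \<in> VALS b"
    and M_lt_N: "enat M < depth V E"
    and \<sigma>: "set_pmf \<sigma> \<subseteq> {vs. train_vlist V E M M' vs}"
    and k: "1 \<le> k"
    and supp: "(inp, lab) \<in> set_pmf (D_train V c VALS CONT \<sigma> k)"
    and t: "t < length lab"
  shows "P_prog V c VALS CONT (inp @ take t lab)
           = P_train (D_train V c VALS CONT \<sigma> k) t (inp @ take t lab)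
         \<and> (\<forall>P. train_loss (D_train V c VALS CONT \<sigma>) K (P_prog V c VALS CONT)
                 \<le> train_loss (D_train V c VALS CONT \<sigma>) K P)"
proof (intro conjI allI)
  show "P_prog V c VALS CONT (inp @ take t lab) = P_train (D_train V c VALS CONT \<sigma> k) t (inp @ take t lab)"
    using P_train_D_train_eq_P_prog[OF VALS CONT CONT_disj k supp t] by simp
  fix P :: "('v, 'c) tok list \<Rightarrow> ('v, 'c) tok pmf"
  show "train_loss (D_train V c VALS CONT \<sigma>) K (P_prog V c VALS CONT) \<le> train_loss (D_train V c VALS CONT \<sigma>) K P"
    unfolding train_loss_def
    by (intro sum_mono nn_integral_sum_atLeastLessThan_mono D_train_next_token_loss_le[OF VALS CONT CONT_disj \<sigma>])
       simp_all
qed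

end
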